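(* Consider the \texttt{Ghost} algorithm described in the context and assume (A1)–(A4) with $\mu=0$. If $\gamma L(1+\omega_{\mathrm{up}}/N)\le\frac12$, then for all $k\ge1$, $$\mathbb{E}\|w_k-w_*\|^2\le\mathbb{E}\|w_{k-1}-w_*\|^2-\gamma\,\mathbb{E}[F(w_{k-1})-F_*]-\frac{\gamma}{2L}\mathbb{E}\|\nabla F(\widehat w_{k-1})\|^2+2\gamma^3\omega_{\mathrm{dwn}}L\Big(1+\frac{\omega_{\mathrm{up}}}{N}\Big)\mathbb{E}\|\nabla F(\widehat w_{k-2})\|^2+\gamma^2\frac{(1+\omega_{\mathrm{up}})\sigma^2}{Nb}\big(1+2\gamma L\omega_{\mathrm{dwn}}\big),$$ with the convention $\nabla F(\widehat w_{-1})=0$.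
   Context: $N\ge1$ homogeneous workers, objective $F:\mathbb{R}^d\to\mathbb{R}$ with minimizer $w_*$, $F_*=F(w_* )$. Worker $i$ at iteration $k$ has an oracle $g_k^i$ (mini-batch $b$) with $\mathbb{E}[g_k^i(w)]=\nabla F(w)$; $\widehat g_k^i(w)=\mathcal{C}_{\mathrm{up}}(g_k^i(w))$. All compressions and oracle calls use fresh independent randomness. \texttt{Ghost} algorithm with step $\gamma$: $\widehat w_0=w_0$; for $k\ge0$: $w_{k+1}=w_k-\gamma\frac1N\sum_i\widehat g^i_{k+1}(\widehat w_k)$, $\widehat w_{k+1}=w_k-\gamma\,\mathcal{C}_{\mathrm{dwn}}\big(\frac1N\sum_i\widehat g^i_{k+1}(\widehat w_k)\big)$ (same vector inside). (A1) for some $\omega_{\mathrm{up}},\omega_{\mathrm{dwn}}>0$, all $w$: $\mathbb{E}[\mathcal{C}_{\mathrm{up/dwn}}(w)]=w$, $\mathbb{E}\|\mathcal{C}_{\mathrm{up/dwn}}(w)-w\|^2\le\omega_{\mathrm{up/dwn}}\|w\|^2$. (A2) $F$ twice continuously differentiable, $L$-smooth. (A3) $F$ $\mu$-strongly convex ($\mu=0$: convex). (A4) $\mathbb{E}\|g_k^i(w)-\nabla F(w)\|^2\le\sigma^2/b$. *)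

theory Defs
  imports "HOL-Probability.Probability"
begin

text \<open>Orc k i : randomness of the stochastic oracle of worker i at iteration k (incl. mini-batch);
  Up k i  : randomness of the uplink compression of worker i at iteration k;
  Dw k    : randomness of the downlink compression at iteration k.\<close>
datatype noise_idx = Orc nat nat | Up nat nat | Dw nat

definition used_idx :: "nat \<Rightarrow> noise_idx set" where
  "used_idx N = {Orc k i | k i. 1 \<le> k \<and> i < N} \<union> {Up k i | k i. 1 \<le> k \<and> i < N}
                 \<union> {Dw k | k. 1 \<le> k}"

text \<open>The Ghost iteration.  G k i w x : oracle g_k^i evaluated at w with randomness x;
  Cup v z / Cdwn v z : compression of v with randomness z.  Returns (w_k, what_k).\<close>
primrec ghost ::
  "nat \<Rightarrow> real \<Rightarrow> (nat \<Rightarrow> nat \<Rightarrow> 'a::euclidean_space \<Rightarrow> 'b \<Rightarrow> 'a) \<Rightarrow> ('a \<Rightarrow> 'b \<Rightarrow> 'a) \<Rightarrow>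
   ('a \<Rightarrow> 'b \<Rightarrow> 'a) \<Rightarrow> (noise_idx \<Rightarrow> 'm \<Rightarrow> 'b) \<Rightarrow> 'a \<Rightarrow> nat \<Rightarrow> 'm \<Rightarrow> 'a \<times> 'a" where
  "ghost N \<gamma> G Cup Cdwn \<xi> w0 0 \<omega> = (w0, w0)"
| "ghost N \<gamma> G Cup Cdwn \<xi> w0 (Suc k) \<omega> =
     (let p = ghost N \<gamma> G Cup Cdwn \<xi> w0 k \<omega>;
          v = (1 / real N) *\<^sub>R (\<Sum>i<N. Cup (G (Suc k) i (snd p) (\<xi> (Orc (Suc k) i) \<omega>))
                                            (\<xi> (Up (Suc k) i) \<omega>))
      in (fst p - \<gamma> *\<^sub>R v, fst p - \<gamma> *\<^sub>R Cdwn v (\<xi> (Dw (Suc k)) \<omega>)))"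

end

(*
  Write u = w_(k-1) - w_star and let v be the averaged compressed gradient used at step k, so that
  |w_k - w_star|^2 = |u|^2 - 2 gamma <v, u> + gamma^2 |v|^2.  The oracle and uplink noise of step k
  is independent of everything that determines w_(k-1) and the perturbed iterate what_(k-1);
  freezing that past (Fubini) gives E <v, u> = E <grad F(what_(k-1)), u>, and since the N worker
  errors are orthogonal, E |v|^2 <= (1 + omega_up/N) E |grad F(what_(k-1))|^2
  + (1 + omega_up) sigma^2 / (N b).  For L-smooth convex F the descent lemma, co-coercivity and
  Young's inequality bound -2 gamma <grad F(what), w - w_star> + gamma^2 (1 + omega_up/N) |grad F(what)|^2
  by -gamma (F w - F_star) - gamma/(2L) |grad F(what)|^2 + gamma L |w - what|^2.  Finally
  w_(k-1) - what_(k-1) = gamma (C_dwn(v') - v') for the previous aggregate v', whose second moment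
  is at most gamma^2 omega_dwn E |v'|^2, and the bound on E |v'|^2 closes the estimate.
*)
theory Submission
  imports Defs
begin

section \<open>Smooth convex functions\<close>

lemma power2_norm_add:
  fixes x y :: "'a::real_inner"
  shows "(norm (x + y))\<^sup>2 = (norm x)\<^sup>2 + 2 * (x \<bullet> y) + (norm y)\<^sup>2"
  using dot_norm[of x y] by simp

lemma has_real_derivative_along_line:
  fixes f :: "'a::real_inner \<Rightarrow> real"
  assumes grad: "\<And>w. (f has_derivative (\<lambda>h. f' w \<bullet> h)) (at w)"
  shows "((\<lambda>t. f (x + t *\<^sub>R d)) has_real_derivative (f' (x + t *\<^sub>R d) \<bullet> d)) (at t within A)"
proof -
  have "((\<lambda>t. x + t *\<^sub>R d) has_derivative (\<lambda>s. s *\<^sub>R d)) (at t within A)"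
    by (auto intro!: derivative_eq_intros)
  from has_derivative_compose[OF this grad] show ?thesis
    by (simp add: has_field_derivative_def mult_commute_abs)
qed

lemma smooth_upper_bound:
  fixes f :: "'a::real_inner \<Rightarrow> real"
  assumes grad: "\<And>w. (f has_derivative (\<lambda>h. f' w \<bullet> h)) (at w)"
    and lipschitz: "\<And>x y. norm (f' x - f' y) \<le> L * norm (x - y)"
  shows "f y \<le> f x + f' x \<bullet> (y - x) + L / 2 * (norm (y - x))\<^sup>2"
proof -
  define d where "d = y - x"
  define \<psi> where "\<psi> t = f (x + t *\<^sub>R d) - t * (f' x \<bullet> d) - L / 2 * t\<^sup>2 * (norm d)\<^sup>2" for t
  have "\<psi> 1 \<le> \<psi> 0"
  proof (rule DERIV_nonpos_imp_nonincreasing[of 0 1])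
    fix t :: real assume t: "0 \<le> t" "t \<le> 1"
    have "(\<psi> has_real_derivative ((f' (x + t *\<^sub>R d) - f' x) \<bullet> d - L * t * (norm d)\<^sup>2)) (at t)"
      unfolding \<psi>_def
      by (rule derivative_eq_intros has_real_derivative_along_line[OF grad] | simp add: inner_diff_left)+
    moreover have "(f' (x + t *\<^sub>R d) - f' x) \<bullet> d \<le> L * t * (norm d)\<^sup>2"
    proof -
      have "(f' (x + t *\<^sub>R d) - f' x) \<bullet> d \<le> norm (f' (x + t *\<^sub>R d) - f' x) * norm d"
        by (rule norm_cauchy_schwarz)
      also have "\<dots> \<le> L * norm (t *\<^sub>R d) * norm d"
        using lipschitz[of "x + t *\<^sub>R d" x] by (intro mult_right_mono) auto
      finally show ?thesis using t by (simp add: power2_eq_square mult.assoc)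
    qed
    ultimately show "\<exists>y. (\<psi> has_real_derivative y) (at t) \<and> y \<le> 0" by auto
  qed simp
  then show ?thesis unfolding \<psi>_def d_def by (simp add: algebra_simps)
qed

lemma convex_on_gradient_inequality:
  fixes f :: "'a::real_inner \<Rightarrow> real"
  assumes grad: "\<And>w. (f has_derivative (\<lambda>h. f' w \<bullet> h)) (at w)"
    and convex: "convex_on UNIV f"
  shows "f x + f' x \<bullet> (z - x) \<le> f z"
proof -
  define \<phi> where "\<phi> t = f (x + t *\<^sub>R (z - x))" for t :: real
  have "convex_on UNIV \<phi>"
  proof (rule convex_onI)
    fix t a b :: real assume "0 < t" "t < 1"
    moreover have "x + ((1 - t) * a + t * b) *\<^sub>R (z - x)
        = (1 - t) *\<^sub>R (x + a *\<^sub>R (z - x)) + t *\<^sub>R (x + b *\<^sub>R (z - x))"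
      by (simp add: algebra_simps)
    ultimately show "\<phi> ((1 - t) *\<^sub>R a + t *\<^sub>R b) \<le> (1 - t) * \<phi> a + t * \<phi> b"
      unfolding \<phi>_def using convex_onD[OF convex, of t] by simp
  qed simp
  then have "\<phi> 1 - \<phi> 0 \<ge> (f' (x + 0 *\<^sub>R (z - x)) \<bullet> (z - x)) * (1 - 0)"
    unfolding \<phi>_def
    by (intro convex_on_imp_above_tangent has_real_derivative_along_line[OF grad]) auto
  then show ?thesis unfolding \<phi>_def by simp
qed

lemma smooth_gradient_bound_at_min:
  fixes f :: "'a::real_inner \<Rightarrow> real"
  assumes grad: "\<And>w. (f has_derivative (\<lambda>h. f' w \<bullet> h)) (at w)"
    and lipschitz: "\<And>x y. norm (f' x - f' y) \<le> L * norm (x - y)" and "L > 0"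
    and minimizer: "\<And>w. f x\<^sub>0 \<le> f w"
  shows "f x\<^sub>0 + (norm (f' x))\<^sup>2 / (2 * L) \<le> f x"
proof -
  \<comment> \<open>one gradient step of length \<open>1/L\<close> from \<open>x\<close>\<close>
  have "f x\<^sub>0 \<le> f (x - (1 / L) *\<^sub>R f' x)" by (rule minimizer)
  also have "\<dots> \<le> f x - f' x \<bullet> f' x / L + L / 2 * (norm (f' x) / L)\<^sup>2"
    using smooth_upper_bound[OF grad lipschitz, where x = x and y = "x - (1 / L) *\<^sub>R f' x"] \<open>L > 0\<close>
    by (simp add: power_mult_distrib)
  also have "\<dots> = f x - (norm (f' x))\<^sup>2 / (2 * L)"
    using \<open>L > 0\<close> by (simp add: power2_norm_eq_inner[symmetric] power_divide power2_eq_square field_simps)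
  finally show ?thesis by simp
qed

lemma smooth_convex_cocoercive:
  fixes f :: "'a::real_inner \<Rightarrow> real"
  assumes grad: "\<And>w. (f has_derivative (\<lambda>h. f' w \<bullet> h)) (at w)"
    and lipschitz: "\<And>x y. norm (f' x - f' y) \<le> L * norm (x - y)" and "L > 0"
    and convex: "convex_on UNIV f"
  shows "f x + f' x \<bullet> (y - x) + (norm (f' y - f' x))\<^sup>2 / (2 * L) \<le> f y"
proof -
  \<comment> \<open>apply the previous lemma to \<open>f - \<langle>f' x, \<cdot>\<rangle>\<close>, which is minimal at \<open>x\<close>\<close>
  define \<phi> where "\<phi> z = f z - f' x \<bullet> z" for z
  have "(\<phi> has_derivative (\<lambda>h. (f' w - f' x) \<bullet> h)) (at w)" for w
    unfolding \<phi>_def by (rule derivative_eq_intros grad | simp add: inner_diff_left)+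
  moreover have "norm ((f' a - f' x) - (f' b - f' x)) \<le> L * norm (a - b)" for a b
    using lipschitz[of a b] by simp
  moreover have "\<phi> x \<le> \<phi> w" for w
    using convex_on_gradient_inequality[OF grad convex, of x w] by (simp add: \<phi>_def inner_diff_right)
  ultimately have "\<phi> x + (norm (f' y - f' x))\<^sup>2 / (2 * L) \<le> \<phi> y"
    by (rule smooth_gradient_bound_at_min[OF _ _ \<open>L > 0\<close>])
  then show ?thesis unfolding \<phi>_def by (simp add: inner_diff_right)
qed

lemma smooth_convex_perturbed_descent:
  fixes f :: "'a::real_inner \<Rightarrow> real"
  assumes grad: "\<And>w. (f has_derivative (\<lambda>h. f' w \<bullet> h)) (at w)"
    and lipschitz: "\<And>x y. norm (f' x - f' y) \<le> L * norm (x - y)" and "L > 0"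
    and convex: "convex_on UNIV f" and minimizer: "\<And>w. f wstar \<le> f w"
    and "\<gamma> > 0" and step: "\<gamma> * L * c \<le> 1 / 2"
  shows "- 2 * \<gamma> * (f' v \<bullet> (w - wstar)) + \<gamma>\<^sup>2 * c * (norm (f' v))\<^sup>2
    \<le> - \<gamma> * (f w - f wstar) - \<gamma> / (2 * L) * (norm (f' v))\<^sup>2 + \<gamma> * L * (norm (w - v))\<^sup>2"
proof -
  define A where "A = (norm (f' v))\<^sup>2 / (2 * L)"
  define D where "D = L * (norm (w - v))\<^sup>2"
  define X where "X = f' v \<bullet> (w - v)"
  define Y where "Y = f' v \<bullet> (v - wstar)"
  have "f wstar + (norm (f' wstar))\<^sup>2 / (2 * L) \<le> f wstar"
    by (rule smooth_gradient_bound_at_min[OF grad lipschitz \<open>L > 0\<close> minimizer])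
  then have "f' wstar = 0" using \<open>L > 0\<close> by (simp add: divide_le_0_iff)
  then have Y: "f v - f wstar + A \<le> Y"
    using smooth_convex_cocoercive[OF grad lipschitz \<open>L > 0\<close> convex, of v wstar]
    by (simp add: A_def Y_def inner_diff_right)
  have X_upper: "f w \<le> f v + X + D / 2"
    using smooth_upper_bound[OF grad lipschitz, of w v] by (simp add: X_def D_def)
  have X_lower: "- A - D / 2 \<le> X"
  proof -
    have "0 \<le> (norm (f' v + L *\<^sub>R (w - v)))\<^sup>2 / (2 * L)" using \<open>L > 0\<close> by simp
    also have "\<dots> = A + X + D / 2"
      using \<open>L > 0\<close> unfolding A_def X_def D_def power2_norm_add
      by (simp add: power_mult_distrib) (simp add: power2_eq_square add_divide_distrib)
    finally show ?thesis by simp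
  qed
  have gap: "f wstar + A \<le> f v"
    unfolding A_def by (rule smooth_gradient_bound_at_min[OF grad lipschitz \<open>L > 0\<close> minimizer])
  have "- 2 * (X + Y) \<le> - (f w - f wstar) - 2 * A + D"
    using X_upper X_lower Y gap by argo
  then have "\<gamma> * (- 2 * (X + Y)) \<le> \<gamma> * (- (f w - f wstar) - 2 * A + D)"
    using \<open>\<gamma> > 0\<close> by (intro mult_left_mono) auto
  moreover have "\<gamma>\<^sup>2 * c * (norm (f' v))\<^sup>2 \<le> \<gamma> * A"
  proof -
    have "(\<gamma> * L * c) * (2 * \<gamma> * A) \<le> 1 / 2 * (2 * \<gamma> * A)"
      using step \<open>\<gamma> > 0\<close> \<open>L > 0\<close> by (intro mult_right_mono) (auto simp: A_def)
    then show ?thesis using \<open>L > 0\<close> by (simp add: A_def power2_eq_square field_simps)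
  qed
  moreover have "f' v \<bullet> (w - wstar) = X + Y" by (simp add: X_def Y_def inner_diff_right)
  ultimately show ?thesis by (simp add: A_def D_def algebra_simps)
qed

section \<open>Square-integrable random vectors\<close>

lemma power2_norm_add_le:
  fixes x y :: "'a::real_normed_vector"
  shows "(norm (x + y))\<^sup>2 \<le> 2 * (norm x)\<^sup>2 + 2 * (norm y)\<^sup>2"
proof -
  have "(norm (x + y))\<^sup>2 \<le> (norm x + norm y)\<^sup>2"
    by (simp add: norm_triangle_ineq power_mono)
  also have "\<dots> \<le> 2 * (norm x)\<^sup>2 + 2 * (norm y)\<^sup>2"
    using sum_squares_bound[of "norm x" "norm y"] by (simp add: power2_sum)
  finally show ?thesis .
qed

lemma abs_inner_le_half_squares:
  fixes x y :: "'a::real_inner"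
  shows "\<bar>x \<bullet> y\<bar> \<le> ((norm x)\<^sup>2 + (norm y)\<^sup>2) / 2"
  using Cauchy_Schwarz_ineq2[of x y] sum_squares_bound[of "norm x" "norm y"] by simp

lemma norm_le_1_plus_power2_norm:
  fixes x :: "'a::real_normed_vector"
  shows "norm x \<le> 1 + (norm x)\<^sup>2"
  using sum_squares_bound[of "norm x" 1, simplified] norm_ge_zero[of x] by linarith

context prob_space
begin

definition square_integrable :: "('a \<Rightarrow> 'v::euclidean_space) \<Rightarrow> bool" where
  "square_integrable X \<longleftrightarrow> X \<in> borel_measurable M \<and> integrable M (\<lambda>\<omega>. (norm (X \<omega>))\<^sup>2)"

lemma square_integrable_measurable: "square_integrable X \<Longrightarrow> X \<in> borel_measurable M"
  and integrable_power2_norm: "square_integrable X \<Longrightarrow> integrable M (\<lambda>\<omega>. (norm (X \<omega>))\<^sup>2)"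
  by (simp_all add: square_integrable_def)

lemma square_integrable_const: "square_integrable (\<lambda>\<omega>. c)"
  by (simp add: square_integrable_def)

lemma square_integrable_add:
  assumes "square_integrable X" "square_integrable Y"
  shows "square_integrable (\<lambda>\<omega>. X \<omega> + Y \<omega>)"
proof -
  have [measurable]: "X \<in> borel_measurable M" "Y \<in> borel_measurable M"
    using assms by (simp_all add: square_integrable_def)
  have "integrable M (\<lambda>\<omega>. (norm (X \<omega> + Y \<omega>))\<^sup>2)"
    by (rule Bochner_Integration.integrable_bound
        [where f = "\<lambda>\<omega>. 2 * (norm (X \<omega>))\<^sup>2 + 2 * (norm (Y \<omega>))\<^sup>2"])
      (use assms power2_norm_add_le in \<open>auto simp: square_integrable_def\<close>)
  then show ?thesis by (simp add: square_integrable_def)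
qed

lemma square_integrable_scaleR: "square_integrable X \<Longrightarrow> square_integrable (\<lambda>\<omega>. c *\<^sub>R X \<omega>)"
  by (auto simp: square_integrable_def power_mult_distrib)

lemma square_integrable_diff:
  assumes "square_integrable X" "square_integrable Y"
  shows "square_integrable (\<lambda>\<omega>. X \<omega> - Y \<omega>)"
  using square_integrable_add[OF assms(1) square_integrable_scaleR[OF assms(2), of "-1"]] by simp

lemma square_integrable_sum:
  "(\<And>i. i \<in> I \<Longrightarrow> square_integrable (X i)) \<Longrightarrow> square_integrable (\<lambda>\<omega>. \<Sum>i\<in>I. X i \<omega>)"
proof (induction I rule: infinite_finite_induct)
  case (insert i I)
  then show ?case by (simp add: square_integrable_add)
qed (simp_all add: square_integrable_const)

lemma square_integrable_lipschitz:
  assumes X: "square_integrable X"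
    and lipschitz: "\<And>x y. norm (g x - g y) \<le> K * norm (x - y)" and "K \<ge> 0"
  shows "square_integrable (\<lambda>\<omega>. g (X \<omega>))"
proof -
  have "continuous_on UNIV g"
    using lipschitz \<open>K \<ge> 0\<close>
    by (intro lipschitz_on_continuous_on[of K]) (auto simp: lipschitz_on_def dist_norm)
  then have [measurable]: "g \<in> borel_measurable borel"
    by (rule borel_measurable_continuous_onI)
  have [measurable]: "X \<in> borel_measurable M"
    using X by (rule square_integrable_measurable)
  have "integrable M (\<lambda>\<omega>. (norm (g (X \<omega>) - g 0))\<^sup>2)"
  proof (rule Bochner_Integration.integrable_bound)
    show "integrable M (\<lambda>\<omega>. K\<^sup>2 * (norm (X \<omega>))\<^sup>2)"
      using integrable_power2_norm[OF X] by simp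
    show "AE \<omega> in M. norm ((norm (g (X \<omega>) - g 0))\<^sup>2) \<le> norm (K\<^sup>2 * (norm (X \<omega>))\<^sup>2)"
    proof (rule AE_I2)
      fix \<omega>
      have "(norm (g (X \<omega>) - g 0))\<^sup>2 \<le> (K * norm (X \<omega>))\<^sup>2"
        using lipschitz[of "X \<omega>" 0] by (intro power_mono) auto
      then show "norm ((norm (g (X \<omega>) - g 0))\<^sup>2) \<le> norm (K\<^sup>2 * (norm (X \<omega>))\<^sup>2)"
        by (simp add: power_mult_distrib)
    qed
  qed measurable
  moreover have "(\<lambda>\<omega>. g (X \<omega>) - g 0) \<in> borel_measurable M" by measurable
  ultimately have "square_integrable (\<lambda>\<omega>. g (X \<omega>) - g 0)"
    by (simp add: square_integrable_def)
  from square_integrable_add[OF this square_integrable_const[of "g 0"]] show ?thesis by simp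
qed

lemma integrable_inner_square_integrable:
  assumes X: "square_integrable X" and Y: "square_integrable Y"
  shows "integrable M (\<lambda>\<omega>. X \<omega> \<bullet> Y \<omega>)"
proof (rule Bochner_Integration.integrable_bound)
  show "integrable M (\<lambda>\<omega>. ((norm (X \<omega>))\<^sup>2 + (norm (Y \<omega>))\<^sup>2) / 2)"
    using integrable_power2_norm[OF X] integrable_power2_norm[OF Y] by simp
  show "AE \<omega> in M. norm (X \<omega> \<bullet> Y \<omega>) \<le> norm (((norm (X \<omega>))\<^sup>2 + (norm (Y \<omega>))\<^sup>2) / 2)"
    using abs_inner_le_half_squares by (intro AE_I2) simp
  have [measurable]: "X \<in> borel_measurable M" "Y \<in> borel_measurable M"
    using X Y by (simp_all add: square_integrable_measurable)
  show "(\<lambda>\<omega>. X \<omega> \<bullet> Y \<omega>) \<in> borel_measurable M" by measurable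
qed

lemma integral_power2_norm_shift:
  fixes Z :: "'a \<Rightarrow> 'v::euclidean_space"
  assumes Z: "integrable M Z" and mean: "(\<integral>\<omega>. Z \<omega> \<partial>M) = m"
    and var: "integrable M (\<lambda>\<omega>. (norm (Z \<omega> - m))\<^sup>2)"
  shows "integrable M (\<lambda>\<omega>. (norm (Z \<omega> - y))\<^sup>2)"
    and "(\<integral>\<omega>. (norm (Z \<omega> - y))\<^sup>2 \<partial>M) = (\<integral>\<omega>. (norm (Z \<omega> - m))\<^sup>2 \<partial>M) + (norm (m - y))\<^sup>2"
proof -
  have split: "(norm (Z \<omega> - y))\<^sup>2
      = (norm (Z \<omega> - m))\<^sup>2 + 2 * ((Z \<omega> - m) \<bullet> (m - y)) + (norm (m - y))\<^sup>2" for \<omega>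
    using power2_norm_add[of "Z \<omega> - m" "m - y"] by simp
  have cross: "integrable M (\<lambda>\<omega>. (Z \<omega> - m) \<bullet> (m - y))"
    using Z by (intro integrable_inner_left) auto
  have "(\<integral>\<omega>. (Z \<omega> - m) \<bullet> (m - y) \<partial>M) = (\<integral>\<omega>. Z \<omega> - m \<partial>M) \<bullet> (m - y)"
    using Z by (intro integral_inner_left) auto
  also have "(\<integral>\<omega>. Z \<omega> - m \<partial>M) = 0"
    using Z mean by (simp add: prob_space)
  finally have "(\<integral>\<omega>. (Z \<omega> - m) \<bullet> (m - y) \<partial>M) = 0" by simp
  then show "integrable M (\<lambda>\<omega>. (norm (Z \<omega> - y))\<^sup>2)"
    and "(\<integral>\<omega>. (norm (Z \<omega> - y))\<^sup>2 \<partial>M) = (\<integral>\<omega>. (norm (Z \<omega> - m))\<^sup>2 \<partial>M) + (norm (m - y))\<^sup>2"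
    unfolding split using var cross by (simp_all add: prob_space)
qed

lemma integral_power2_norm_add_orthogonal:
  assumes X: "square_integrable X" and Y: "square_integrable Y"
    and orthogonal: "(\<integral>\<omega>. X \<omega> \<bullet> Y \<omega> \<partial>M) = 0"
  shows "(\<integral>\<omega>. (norm (X \<omega> + Y \<omega>))\<^sup>2 \<partial>M) = (\<integral>\<omega>. (norm (X \<omega>))\<^sup>2 \<partial>M) + (\<integral>\<omega>. (norm (Y \<omega>))\<^sup>2 \<partial>M)"
  using integrable_power2_norm[OF X] integrable_power2_norm[OF Y]
    integrable_inner_square_integrable[OF X Y] orthogonal
  by (simp add: power2_norm_add)

lemma integral_power2_norm_sum_orthogonal:
  fixes D :: "nat \<Rightarrow> 'a \<Rightarrow> 'v::euclidean_space"
  assumes "\<And>i. i < n \<Longrightarrow> square_integrable (D i)"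
    and "\<And>i. i < n \<Longrightarrow> (\<integral>\<omega>. (\<Sum>j<i. D j \<omega>) \<bullet> D i \<omega> \<partial>M) = 0"
  shows "(\<integral>\<omega>. (norm (\<Sum>i<n. D i \<omega>))\<^sup>2 \<partial>M) = (\<Sum>i<n. \<integral>\<omega>. (norm (D i \<omega>))\<^sup>2 \<partial>M)"
  using assms
proof (induction n)
  case (Suc n)
  have "square_integrable (\<lambda>\<omega>. \<Sum>i<n. D i \<omega>)"
    using Suc.prems(1) by (intro square_integrable_sum) auto
  from integral_power2_norm_add_orthogonal[OF this Suc.prems(1)[of n] Suc.prems(2)[of n]]
  show ?case using Suc by simp
qed simp

lemma integrable_smooth_bounded_below:
  fixes f :: "'v::euclidean_space \<Rightarrow> real"
  assumes grad: "\<And>w. (f has_derivative (\<lambda>h. f' w \<bullet> h)) (at w)"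
    and lipschitz: "\<And>x y. norm (f' x - f' y) \<le> L * norm (x - y)" and "0 \<le> L"
    and below: "\<And>w. c \<le> f w" and X: "square_integrable X"
  shows "integrable M (\<lambda>\<omega>. f (X \<omega>))"
proof (rule Bochner_Integration.integrable_bound)
  show "integrable M (\<lambda>\<omega>. \<bar>c\<bar> + \<bar>f 0\<bar> + (norm (f' 0))\<^sup>2 + (1 + L) * (norm (X \<omega>))\<^sup>2)"
    using integrable_power2_norm[OF X] by simp
  have "continuous_on UNIV f"
    using grad has_derivative_continuous continuous_at_imp_continuous_on by blast
  then have [measurable]: "f \<in> borel_measurable borel"
    by (rule borel_measurable_continuous_onI)
  have [measurable]: "X \<in> borel_measurable M"
    using X by (rule square_integrable_measurable)
  show "(\<lambda>\<omega>. f (X \<omega>)) \<in> borel_measurable M"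
    by measurable
  have "\<bar>f x\<bar> \<le> \<bar>c\<bar> + \<bar>f 0\<bar> + (norm (f' 0))\<^sup>2 + (1 + L) * (norm x)\<^sup>2" for x
  proof -
    have "f x \<le> f 0 + f' 0 \<bullet> x + L * (norm x)\<^sup>2 / 2"
      using smooth_upper_bound[OF grad lipschitz, where x = 0 and y = x] by simp
    moreover have "f' 0 \<bullet> x \<le> ((norm (f' 0))\<^sup>2 + (norm x)\<^sup>2) / 2"
      using abs_inner_le_half_squares[of "f' 0" x] by simp
    moreover have "0 \<le> L * (norm x)\<^sup>2"
      using \<open>0 \<le> L\<close> by simp
    moreover have "(1 + L) * (norm x)\<^sup>2 = (norm x)\<^sup>2 + L * (norm x)\<^sup>2"
      by (simp add: algebra_simps)
    ultimately show ?thesis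
      using below[of x] abs_ge_self[of c] abs_ge_minus_self[of c] abs_ge_self[of "f 0"]
        abs_ge_minus_self[of "f 0"] zero_le_power2[of "norm x"] zero_le_power2[of "norm (f' 0)"]
      unfolding abs_le_iff by (intro conjI) argo+
  qed
  then show "AE \<omega> in M. norm (f (X \<omega>)) \<le> norm (\<bar>c\<bar> + \<bar>f 0\<bar> + (norm (f' 0))\<^sup>2 + (1 + L) * (norm (X \<omega>))\<^sup>2)"
    using \<open>0 \<le> L\<close> by (intro AE_I2) simp
qed

end

section \<open>Freezing an independent argument\<close>

lemma (in prob_space) indep_var_integrable_product:
  fixes g :: "'x \<Rightarrow> 'x \<Rightarrow> 'c::{banach, second_countable_topology}"
  assumes indep: "indep_var MX X MY Y"
    and g: "(\<lambda>p. g (fst p) (snd p)) \<in> borel_measurable (MX \<Otimes>\<^sub>M MY)"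
    and integrable_section: "\<And>x. x \<in> space MX \<Longrightarrow> integrable M (\<lambda>\<omega>. g x (Y \<omega>))"
    and bound: "\<And>x. x \<in> space MX \<Longrightarrow> (\<integral>\<omega>. norm (g x (Y \<omega>)) \<partial>M) \<le> B x"
    and integrable_B: "integrable M (\<lambda>\<omega>. B (X \<omega>))"
  shows "integrable (distr M MX X \<Otimes>\<^sub>M distr M MY Y) (\<lambda>p. g (fst p) (snd p))"
proof -
  have [measurable]: "X \<in> measurable M MX" "Y \<in> measurable M MY"
    using indep by (simp_all add: indep_var_distribution_eq)
  define PX where "PX = distr M MX X"
  define PY where "PY = distr M MY Y"
  interpret P: pair_prob_space PX PY
    unfolding PX_def PY_def
    by (intro pair_prob_space.intro pair_sigma_finite.intro prob_space_imp_sigma_finite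
        prob_space_distr) simp_all
  have g_P: "(\<lambda>p. g (fst p) (snd p)) \<in> borel_measurable (PX \<Otimes>\<^sub>M PY)"
    using g indep by (simp add: indep_var_distribution_eq PX_def PY_def)
  have sets_PX[measurable_cong]: "sets PX = sets MX" and space_PX: "space PX = space MX"
    by (simp_all add: PX_def)
  have section_PY: "integrable PY (g x)" "(\<integral>y. norm (g x y) \<partial>PY) = (\<integral>\<omega>. norm (g x (Y \<omega>)) \<partial>M)"
    if "x \<in> space MX" for x
  proof -
    have [measurable]: "g x \<in> borel_measurable MY"
      using measurable_Pair2[OF g that] by simp
    show "integrable PY (g x)" "(\<integral>y. norm (g x y) \<partial>PY) = (\<integral>\<omega>. norm (g x (Y \<omega>)) \<partial>M)"
      unfolding PY_def using integrable_section[OF that] by (simp_all add: integrable_distr_eq integral_distr)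
  qed
  have "(\<lambda>x. \<integral>y. norm (g x y) \<partial>PY) \<in> borel_measurable PX"
    using g_P by (intro P.M2.borel_measurable_lebesgue_integral) simp
  then have [measurable]: "(\<lambda>x. \<integral>y. norm (g x y) \<partial>PY) \<in> borel_measurable MX"
    by (simp add: measurable_cong_sets[OF sets_PX refl])
  have "integrable M (\<lambda>\<omega>. \<integral>y. norm (g (X \<omega>) y) \<partial>PY)"
    using integrable_B
  proof (rule Bochner_Integration.integrable_bound)
    show "AE \<omega> in M. norm (\<integral>y. norm (g (X \<omega>) y) \<partial>PY) \<le> norm (B (X \<omega>))"
      using bound section_PY(2) measurable_space[of X M MX] by (intro AE_I2) force
  qed measurable
  then have "integrable PX (\<lambda>x. \<integral>y. norm (g x y) \<partial>PY)"
    unfolding PX_def by (subst integrable_distr_eq) simp_all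
  then show ?thesis
    unfolding PX_def[symmetric] PY_def[symmetric]
    by (intro P.Fubini_integrable[OF g_P] AE_I2) (auto simp: space_PX intro: section_PY(1))
qed

lemma (in prob_space) indep_var_integral_freeze:
  fixes g :: "'x \<Rightarrow> 'x \<Rightarrow> 'c::{banach, second_countable_topology}"
  assumes indep: "indep_var MX X MY Y"
    and g: "(\<lambda>p. g (fst p) (snd p)) \<in> borel_measurable (MX \<Otimes>\<^sub>M MY)"
    and integrable_section: "\<And>x. x \<in> space MX \<Longrightarrow> integrable M (\<lambda>\<omega>. g x (Y \<omega>))"
    and bound: "\<And>x. x \<in> space MX \<Longrightarrow> (\<integral>\<omega>. norm (g x (Y \<omega>)) \<partial>M) \<le> B x"
    and integrable_B: "integrable M (\<lambda>\<omega>. B (X \<omega>))"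
  shows "integrable M (\<lambda>\<omega>. g (X \<omega>) (Y \<omega>))"
    and "integrable M (\<lambda>\<omega>. \<integral>\<omega>'. g (X \<omega>) (Y \<omega>') \<partial>M)"
    and "(\<integral>\<omega>. g (X \<omega>) (Y \<omega>) \<partial>M) = (\<integral>\<omega>. (\<integral>\<omega>'. g (X \<omega>) (Y \<omega>') \<partial>M) \<partial>M)"
proof -
  have [measurable]: "X \<in> measurable M MX" "Y \<in> measurable M MY"
    using indep by (simp_all add: indep_var_distribution_eq)
  define PX where "PX = distr M MX X"
  define PY where "PY = distr M MY Y"
  interpret P: pair_prob_space PX PY
    unfolding PX_def PY_def
    by (intro pair_prob_space.intro pair_sigma_finite.intro prob_space_imp_sigma_finite
        prob_space_distr) simp_all
  have PXY: "PX \<Otimes>\<^sub>M PY = distr M (MX \<Otimes>\<^sub>M MY) (\<lambda>\<omega>. (X \<omega>, Y \<omega>))"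
    using indep by (simp add: indep_var_distribution_eq PX_def PY_def)
  have integrable_g: "integrable (PX \<Otimes>\<^sub>M PY) (\<lambda>p. g (fst p) (snd p))"
    unfolding PX_def PY_def by (rule indep_var_integrable_product[OF assms])
  then show "integrable M (\<lambda>\<omega>. g (X \<omega>) (Y \<omega>))"
    using g unfolding PXY by (simp add: integrable_distr_eq)
  have g_P: "(\<lambda>p. g (fst p) (snd p)) \<in> borel_measurable (PX \<Otimes>\<^sub>M PY)"
    using g unfolding PXY by simp
  have sets_PX: "sets PX = sets MX"
    by (simp add: PX_def)
  have "(\<lambda>x. \<integral>y. g x y \<partial>PY) \<in> borel_measurable PX"
    using g_P by (intro P.M2.borel_measurable_lebesgue_integral) simp
  then have [measurable]: "(\<lambda>x. \<integral>y. g x y \<partial>PY) \<in> borel_measurable MX"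
    by (simp add: measurable_cong_sets[OF sets_PX refl])
  have inner_eq: "(\<integral>y. g (X \<omega>) y \<partial>PY) = (\<integral>\<omega>'. g (X \<omega>) (Y \<omega>') \<partial>M)" if "\<omega> \<in> space M" for \<omega>
  proof -
    have "X \<omega> \<in> space MX"
      using measurable_space[of X M MX] that by simp
    then have [measurable]: "g (X \<omega>) \<in> borel_measurable MY"
      using measurable_Pair2[OF g] by simp
    show ?thesis
      unfolding PY_def by (simp add: integral_distr)
  qed
  have "integrable PX (\<lambda>x. \<integral>y. g x y \<partial>PY)"
    using P.integrable_fst'[OF integrable_g] by simp
  then show "integrable M (\<lambda>\<omega>. \<integral>\<omega>'. g (X \<omega>) (Y \<omega>') \<partial>M)"
    unfolding PX_def
    by (simp add: integrable_distr_eq Bochner_Integration.integrable_cong[OF refl inner_eq])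
  have "(\<integral>\<omega>. g (X \<omega>) (Y \<omega>) \<partial>M) = integral\<^sup>L (PX \<Otimes>\<^sub>M PY) (\<lambda>p. g (fst p) (snd p))"
    using g unfolding PXY by (simp add: integral_distr)
  also have "\<dots> = (\<integral>x. (\<integral>y. g x y \<partial>PY) \<partial>PX)"
    using P.integral_fst'[OF integrable_g] by simp
  also have "\<dots> = (\<integral>\<omega>. (\<integral>\<omega>'. g (X \<omega>) (Y \<omega>') \<partial>M) \<partial>M)"
    unfolding PX_def by (simp add: integral_distr Bochner_Integration.integral_cong[OF refl inner_eq])
  finally show "(\<integral>\<omega>. g (X \<omega>) (Y \<omega>) \<partial>M) = (\<integral>\<omega>. (\<integral>\<omega>'. g (X \<omega>) (Y \<omega>') \<partial>M) \<partial>M)" .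
qed

text \<open>A substitute for conditioning on \<open>X\<close>: the moments of \<open>R (X \<omega>) (Y \<omega>)\<close> are those of
  \<open>R x (Y \<omega>)\<close> averaged over the frozen value \<open>x = X \<omega>\<close>.\<close>

locale independent_noise = prob_space +
  fixes MX :: "'x measure" and X :: "'a \<Rightarrow> 'x" and MY :: "'x measure" and Y :: "'a \<Rightarrow> 'x"
    and R :: "'x \<Rightarrow> 'x \<Rightarrow> 'v::euclidean_space" and m :: "'x \<Rightarrow> 'v" and s :: "'x \<Rightarrow> real"
  assumes indep: "indep_var MX X MY Y"
    and R_measurable[measurable]: "(\<lambda>p. R (fst p) (snd p)) \<in> borel_measurable (MX \<Otimes>\<^sub>M MY)"
    and m_measurable[measurable]: "m \<in> borel_measurable MX"
    and integrable_R: "\<And>x. x \<in> space MX \<Longrightarrow> integrable M (\<lambda>\<omega>. R x (Y \<omega>))"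
    and integral_R: "\<And>x. x \<in> space MX \<Longrightarrow> (\<integral>\<omega>. R x (Y \<omega>) \<partial>M) = m x"
    and integrable_variance:
      "\<And>x. x \<in> space MX \<Longrightarrow> integrable M (\<lambda>\<omega>. (norm (R x (Y \<omega>) - m x))\<^sup>2)"
    and variance_le: "\<And>x. x \<in> space MX \<Longrightarrow> (\<integral>\<omega>. (norm (R x (Y \<omega>) - m x))\<^sup>2 \<partial>M) \<le> s x"
    and integrable_s: "integrable M (\<lambda>\<omega>. s (X \<omega>))"
begin

lemma measurable_X[measurable]: "X \<in> measurable M MX"
  and measurable_Y[measurable]: "Y \<in> measurable M MY"
  using indep by (simp_all add: indep_var_distribution_eq)

lemma X_in_space: "\<omega> \<in> space M \<Longrightarrow> X \<omega> \<in> space MX"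
  using measurable_space[OF measurable_X] .

lemma measurable_noisy: "(\<lambda>\<omega>. R (X \<omega>) (Y \<omega>)) \<in> borel_measurable M"
  using measurable_compose[OF measurable_Pair[OF measurable_X measurable_Y] R_measurable] by simp

lemma integrable_noisy_variance:
  "integrable M (\<lambda>\<omega>. (norm (R (X \<omega>) (Y \<omega>) - m (X \<omega>)))\<^sup>2)"
  and integral_noisy_variance_le:
  "(\<integral>\<omega>. (norm (R (X \<omega>) (Y \<omega>) - m (X \<omega>)))\<^sup>2 \<partial>M) \<le> (\<integral>\<omega>. s (X \<omega>) \<partial>M)"
proof -
  have "(\<lambda>p. (norm (R (fst p) (snd p) - m (fst p)))\<^sup>2) \<in> borel_measurable (MX \<Otimes>\<^sub>M MY)"
    by measurable
  note freeze = indep_var_integral_freeze[OF indep this integrable_variance _ integrable_s]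
    variance_le
  show "integrable M (\<lambda>\<omega>. (norm (R (X \<omega>) (Y \<omega>) - m (X \<omega>)))\<^sup>2)"
    using freeze by simp
  have "(\<integral>\<omega>. (norm (R (X \<omega>) (Y \<omega>) - m (X \<omega>)))\<^sup>2 \<partial>M)
      = (\<integral>\<omega>. (\<integral>\<omega>'. (norm (R (X \<omega>) (Y \<omega>') - m (X \<omega>)))\<^sup>2 \<partial>M) \<partial>M)"
    using freeze by simp
  also have "\<dots> \<le> (\<integral>\<omega>. s (X \<omega>) \<partial>M)"
    using freeze integrable_s X_in_space by (intro integral_mono) simp_all
  finally show "(\<integral>\<omega>. (norm (R (X \<omega>) (Y \<omega>) - m (X \<omega>)))\<^sup>2 \<partial>M) \<le> (\<integral>\<omega>. s (X \<omega>) \<partial>M)" .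
qed

lemma integral_noisy_orthogonal:
  "(\<integral>\<omega>. \<phi> (X \<omega>) \<bullet> (R (X \<omega>) (Y \<omega>) - m (X \<omega>)) \<partial>M) = 0"
  if \<phi>_measurable[measurable]: "\<phi> \<in> borel_measurable MX" and \<phi>: "square_integrable (\<lambda>\<omega>. \<phi> (X \<omega>))"
proof -
  have meas: "(\<lambda>p. \<phi> (fst p) \<bullet> (R (fst p) (snd p) - m (fst p))) \<in> borel_measurable (MX \<Otimes>\<^sub>M MY)"
    by measurable
  have sections: "integrable M (\<lambda>\<omega>. \<phi> x \<bullet> (R x (Y \<omega>) - m x))" if "x \<in> space MX" for x
    using integrable_R[OF that] by (intro integrable_inner_right) simp
  have bound: "(\<integral>\<omega>. norm (\<phi> x \<bullet> (R x (Y \<omega>) - m x)) \<partial>M) \<le> ((norm (\<phi> x))\<^sup>2 + s x) / 2"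
    if "x \<in> space MX" for x
  proof -
    have "(\<integral>\<omega>. norm (\<phi> x \<bullet> (R x (Y \<omega>) - m x)) \<partial>M)
        \<le> (\<integral>\<omega>. ((norm (\<phi> x))\<^sup>2 + (norm (R x (Y \<omega>) - m x))\<^sup>2) / 2 \<partial>M)"
      using integrable_R[OF that] integrable_variance[OF that] abs_inner_le_half_squares
      by (intro integral_mono) auto
    also have "\<dots> \<le> ((norm (\<phi> x))\<^sup>2 + s x) / 2"
      using integrable_variance[OF that] variance_le[OF that] by (simp add: prob_space)
    finally show ?thesis .
  qed
  have "integrable M (\<lambda>\<omega>. ((norm (\<phi> (X \<omega>)))\<^sup>2 + s (X \<omega>)) / 2)"
    using integrable_power2_norm[OF \<phi>] integrable_s by simp
  note freeze = indep_var_integral_freeze[OF indep meas sections bound this]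
  have "(\<integral>\<omega>'. \<phi> x \<bullet> (R x (Y \<omega>') - m x) \<partial>M) = 0" if "x \<in> space MX" for x
    using integrable_R[OF that] integral_R[OF that] by (simp add: prob_space)
  then show ?thesis
    using X_in_space by (simp add: freeze(3) cong: Bochner_Integration.integral_cong)
qed

lemma integrable_noisy:
  "integrable M (\<lambda>\<omega>. R (X \<omega>) (Y \<omega>))"
  and integral_noisy:
  "(\<integral>\<omega>. R (X \<omega>) (Y \<omega>) \<partial>M) = (\<integral>\<omega>. m (X \<omega>) \<partial>M)"
  if m: "integrable M (\<lambda>\<omega>. m (X \<omega>))"
proof -
  have bound: "(\<integral>\<omega>. norm (R x (Y \<omega>)) \<partial>M) \<le> 1 + s x + norm (m x)" if "x \<in> space MX" for x
  proof -
    have "norm (R x y) \<le> 1 + (norm (R x y - m x))\<^sup>2 + norm (m x)" for y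
      using norm_triangle_sub[of "R x y" "m x"] norm_le_1_plus_power2_norm[of "R x y - m x"]
      by simp
    then have "(\<integral>\<omega>. norm (R x (Y \<omega>)) \<partial>M)
        \<le> (\<integral>\<omega>. 1 + (norm (R x (Y \<omega>) - m x))\<^sup>2 + norm (m x) \<partial>M)"
      using integrable_R[OF that] integrable_variance[OF that] by (intro integral_mono) auto
    also have "\<dots> \<le> 1 + s x + norm (m x)"
      using integrable_variance[OF that] variance_le[OF that] by (simp add: prob_space)
    finally show ?thesis .
  qed
  have "integrable M (\<lambda>\<omega>. 1 + s (X \<omega>) + norm (m (X \<omega>)))"
    using integrable_s m by simp
  note freeze = indep_var_integral_freeze[OF indep R_measurable integrable_R bound this]
  show "integrable M (\<lambda>\<omega>. R (X \<omega>) (Y \<omega>))"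
    by (rule freeze(1))
  show "(\<integral>\<omega>. R (X \<omega>) (Y \<omega>) \<partial>M) = (\<integral>\<omega>. m (X \<omega>) \<partial>M)"
    using X_in_space integral_R by (simp add: freeze(3) cong: Bochner_Integration.integral_cong)
qed

end

section \<open>The Ghost iterates as functions of the noise\<close>

locale ghost_setting = prob_space M for M :: "'m measure" +
  fixes S :: "'b measure" and \<xi> :: "noise_idx \<Rightarrow> 'm \<Rightarrow> 'b" and N :: nat
    and F :: "'a::euclidean_space \<Rightarrow> real" and gradF :: "'a \<Rightarrow> 'a"
    and G :: "nat \<Rightarrow> nat \<Rightarrow> 'a \<Rightarrow> 'b \<Rightarrow> 'a"
    and Cup Cdwn :: "'a \<Rightarrow> 'b \<Rightarrow> 'a"
    and b :: nat and L \<gamma> \<sigma> \<omega>up \<omega>dwn :: real and w0 wstar :: 'a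
  assumes indep: "indep_vars (\<lambda>_. S) \<xi> (used_idx N)"
    and N: "N \<ge> 1"
    and \<gamma>: "\<gamma> > 0"
    and \<omega>: "\<omega>up > 0" "\<omega>dwn > 0"
    and G_meas: "\<And>k i. (\<lambda>p. G k i (fst p) (snd p)) \<in> borel_measurable (borel \<Otimes>\<^sub>M S)"
    and Cup_meas: "(\<lambda>p. Cup (fst p) (snd p)) \<in> borel_measurable (borel \<Otimes>\<^sub>M S)"
    and Cdwn_meas: "(\<lambda>p. Cdwn (fst p) (snd p)) \<in> borel_measurable (borel \<Otimes>\<^sub>M S)"
    and A1_up_int: "\<And>v k i. k \<ge> 1 \<Longrightarrow> i < N \<Longrightarrow>
                      integrable M (\<lambda>\<omega>. Cup v (\<xi> (Up k i) \<omega>))"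
    and A1_up_unb: "\<And>v k i. k \<ge> 1 \<Longrightarrow> i < N \<Longrightarrow>
                      (\<integral>\<omega>. Cup v (\<xi> (Up k i) \<omega>) \<partial>M) = v"
    and A1_up_var_int: "\<And>v k i. k \<ge> 1 \<Longrightarrow> i < N \<Longrightarrow>
                      integrable M (\<lambda>\<omega>. (norm (Cup v (\<xi> (Up k i) \<omega>) - v))\<^sup>2)"
    and A1_up_var: "\<And>v k i. k \<ge> 1 \<Longrightarrow> i < N \<Longrightarrow>
                      (\<integral>\<omega>. (norm (Cup v (\<xi> (Up k i) \<omega>) - v))\<^sup>2 \<partial>M) \<le> \<omega>up * (norm v)\<^sup>2"
    and A1_dw_int: "\<And>v k. k \<ge> 1 \<Longrightarrow> integrable M (\<lambda>\<omega>. Cdwn v (\<xi> (Dw k) \<omega>))"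
    and A1_dw_unb: "\<And>v k. k \<ge> 1 \<Longrightarrow> (\<integral>\<omega>. Cdwn v (\<xi> (Dw k) \<omega>) \<partial>M) = v"
    and A1_dw_var_int: "\<And>v k. k \<ge> 1 \<Longrightarrow>
                      integrable M (\<lambda>\<omega>. (norm (Cdwn v (\<xi> (Dw k) \<omega>) - v))\<^sup>2)"
    and A1_dw_var: "\<And>v k. k \<ge> 1 \<Longrightarrow>
                      (\<integral>\<omega>. (norm (Cdwn v (\<xi> (Dw k) \<omega>) - v))\<^sup>2 \<partial>M) \<le> \<omega>dwn * (norm v)\<^sup>2"
    and A2_grad: "\<And>w. (F has_derivative (\<lambda>h. gradF w \<bullet> h)) (at w)"
    and A2_L: "L > 0"
    and A2_smooth: "\<And>x y. norm (gradF x - gradF y) \<le> L * norm (x - y)"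
    and A3: "convex_on UNIV F"
    and wstar: "\<And>w. F wstar \<le> F w"
    and A4_int: "\<And>w k i. k \<ge> 1 \<Longrightarrow> i < N \<Longrightarrow> integrable M (\<lambda>\<omega>. G k i w (\<xi> (Orc k i) \<omega>))"
    and A4_unb: "\<And>w k i. k \<ge> 1 \<Longrightarrow> i < N \<Longrightarrow> (\<integral>\<omega>. G k i w (\<xi> (Orc k i) \<omega>) \<partial>M) = gradF w"
    and A4_var_int: "\<And>w k i. k \<ge> 1 \<Longrightarrow> i < N \<Longrightarrow>
                      integrable M (\<lambda>\<omega>. (norm (G k i w (\<xi> (Orc k i) \<omega>) - gradF w))\<^sup>2)"
    and A4_var: "\<And>w k i. k \<ge> 1 \<Longrightarrow> i < N \<Longrightarrow>
                      (\<integral>\<omega>. (norm (G k i w (\<xi> (Orc k i) \<omega>) - gradF w))\<^sup>2 \<partial>M) \<le> \<sigma>\<^sup>2 / real b"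
    and step: "\<gamma> * L * (1 + \<omega>up / real N) \<le> 1 / 2"
begin

lemma G_measurable[measurable]:
  "X \<in> borel_measurable K \<Longrightarrow> Y \<in> measurable K S \<Longrightarrow> (\<lambda>x. G k i (X x) (Y x)) \<in> borel_measurable K"
  using measurable_compose[OF measurable_Pair G_meas, of X K Y] by simp

lemma Cup_measurable[measurable]:
  "X \<in> borel_measurable K \<Longrightarrow> Y \<in> measurable K S \<Longrightarrow> (\<lambda>x. Cup (X x) (Y x)) \<in> borel_measurable K"
  using measurable_compose[OF measurable_Pair Cup_meas, of X K Y] by simp

lemma Cdwn_measurable[measurable]:
  "X \<in> borel_measurable K \<Longrightarrow> Y \<in> measurable K S \<Longrightarrow> (\<lambda>x. Cdwn (X x) (Y x)) \<in> borel_measurable K"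
  using measurable_compose[OF measurable_Pair Cdwn_meas, of X K Y] by simp

lemma gradF_measurable[measurable]: "gradF \<in> borel_measurable borel"
  using A2_L A2_smooth
  by (intro borel_measurable_continuous_onI lipschitz_on_continuous_on[of L])
    (auto simp: lipschitz_on_def dist_norm)

definition noise :: "'m \<Rightarrow> noise_idx \<Rightarrow> 'b" where
  "noise \<omega> i = \<xi> i \<omega>"

definition noise_on :: "noise_idx set \<Rightarrow> 'm \<Rightarrow> noise_idx \<Rightarrow> 'b" where
  "noise_on J \<omega> = restrict (noise \<omega>) J"

lemma noise_on_eq: "noise_on J = (\<lambda>\<omega>. \<lambda>i\<in>J. \<xi> i \<omega>)"
  by (simp add: noise_on_def[abs_def] noise_def[abs_def])

lemma noise_on_apply[simp]: "i \<in> J \<Longrightarrow> noise_on J \<omega> i = \<xi> i \<omega>"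
  by (simp add: noise_on_def noise_def)

lemma measurable_noise_on[measurable]:
  "J \<subseteq> used_idx N \<Longrightarrow> noise_on J \<in> measurable M (PiM J (\<lambda>_. S))"
  using indep unfolding indep_vars_def noise_on_eq by (auto intro!: measurable_restrict)

lemma indep_noise_on:
  "J \<inter> J' = {} \<Longrightarrow> J \<subseteq> used_idx N \<Longrightarrow> J' \<subseteq> used_idx N \<Longrightarrow>
    indep_var (PiM J (\<lambda>_. S)) (noise_on J) (PiM J' (\<lambda>_. S)) (noise_on J')"
  unfolding noise_on_eq by (rule indep_var_restrict[OF indep])

text \<open>Running \<open>ghost\<close> on a noise realization \<open>p\<close> instead of \<open>\<xi>\<close> makes the iterates
  deterministic functions of \<open>p\<close>; they only depend on the coordinates in \<open>past n\<close>.\<close>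

definition iterates :: "nat \<Rightarrow> (noise_idx \<Rightarrow> 'b) \<Rightarrow> 'a \<times> 'a" where
  "iterates n p = ghost N \<gamma> G Cup Cdwn (\<lambda>i q. q i) w0 n p"

definition uplink_grad :: "nat \<Rightarrow> nat \<Rightarrow> (noise_idx \<Rightarrow> 'b) \<Rightarrow> 'a" where
  "uplink_grad n i p = Cup (G (Suc n) i (snd (iterates n p)) (p (Orc (Suc n) i))) (p (Up (Suc n) i))"

definition avg_grad :: "nat \<Rightarrow> (noise_idx \<Rightarrow> 'b) \<Rightarrow> 'a" where
  "avg_grad n p = (1 / real N) *\<^sub>R (\<Sum>i<N. uplink_grad n i p)"

lemma iterates_0: "iterates 0 p = (w0, w0)"
  by (simp add: iterates_def)

lemma iterates_Suc: "iterates (Suc n) p =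
    (fst (iterates n p) - \<gamma> *\<^sub>R avg_grad n p,
     fst (iterates n p) - \<gamma> *\<^sub>R Cdwn (avg_grad n p) (p (Dw (Suc n))))"
  by (simp add: iterates_def avg_grad_def uplink_grad_def Let_def)

definition past :: "nat \<Rightarrow> noise_idx set" where
  "past n = {Orc k i | k i. 1 \<le> k \<and> k \<le> n \<and> i < N} \<union> {Up k i | k i. 1 \<le> k \<and> k \<le> n \<and> i < N}
     \<union> {Dw k | k. 1 \<le> k \<and> k \<le> n}"

definition uplink_noise :: "nat \<Rightarrow> nat \<Rightarrow> noise_idx set" where
  "uplink_noise k m = {Orc k i | i. i < m} \<union> {Up k i | i. i < m}"

lemma past_subset_used: "past n \<subseteq> used_idx N"
  by (auto simp: past_def used_idx_def)

lemma uplink_noise_subset_used: "m \<le> N \<Longrightarrow> uplink_noise (Suc n) m \<subseteq> used_idx N"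
  by (auto simp: uplink_noise_def used_idx_def)

lemma past_mono: "n \<le> n' \<Longrightarrow> past n \<subseteq> past n'"
  by (auto simp: past_def)

lemma not_in_past[simp]:
  "Orc (Suc n) i \<notin> past n" "Up (Suc n) i \<notin> past n" "Dw (Suc n) \<notin> past n"
  by (auto simp: past_def)

lemma iterates_cong: "(\<And>i. i \<in> past n \<Longrightarrow> p i = q i) \<Longrightarrow> iterates n p = iterates n q"
proof (induction n)
  case 0
  then show ?case by (simp add: iterates_0)
next
  case (Suc n)
  then have "iterates n p = iterates n q"
    using past_mono[of n "Suc n"] by auto
  moreover have "uplink_grad n i p = uplink_grad n i q" if "i < N" for i
    using Suc.prems that \<open>iterates n p = iterates n q\<close> by (auto simp: uplink_grad_def past_def)
  ultimately show ?case
    using Suc.prems by (auto simp: iterates_Suc avg_grad_def past_def)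
qed

lemma uplink_grad_cong:
  "(\<And>j. j \<in> past n \<union> uplink_noise (Suc n) (Suc i) \<Longrightarrow> p j = q j) \<Longrightarrow>
    uplink_grad n i p = uplink_grad n i q"
  using iterates_cong[of n p q] by (auto simp: uplink_grad_def uplink_noise_def)

lemma avg_grad_cong:
  "(\<And>j. j \<in> past n \<union> uplink_noise (Suc n) N \<Longrightarrow> p j = q j) \<Longrightarrow> avg_grad n p = avg_grad n q"
  unfolding avg_grad_def
  by (intro arg_cong[where f = "scaleR _"] sum.cong refl uplink_grad_cong) (auto simp: uplink_noise_def)

lemma measurable_avg_grad:
  assumes "past n \<union> uplink_noise (Suc n) N \<subseteq> J"
    and iterates: "(\<lambda>p. snd (iterates n p)) \<in> borel_measurable (PiM J (\<lambda>_. S))"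
  shows "avg_grad n \<in> borel_measurable (PiM J (\<lambda>_. S))"
proof -
  have [measurable]: "Orc (Suc n) i \<in> J" "Up (Suc n) i \<in> J" if "i < N" for i
    using assms that by (auto simp: uplink_noise_def)
  note iterates[measurable]
  show ?thesis unfolding avg_grad_def[abs_def] uplink_grad_def by measurable
qed

lemma measurable_iterates_pair:
  "past n \<subseteq> J \<Longrightarrow> (\<lambda>p. fst (iterates n p)) \<in> borel_measurable (PiM J (\<lambda>_. S)) \<and>
    (\<lambda>p. snd (iterates n p)) \<in> borel_measurable (PiM J (\<lambda>_. S))"
proof (induction n)
  case 0
  then show ?case by (simp add: iterates_0)
next
  case (Suc n)
  have "past n \<union> uplink_noise (Suc n) N \<subseteq> J" "Dw (Suc n) \<in> J"
    using Suc.prems by (auto simp: past_def uplink_noise_def)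
  moreover have "(\<lambda>p. fst (iterates n p)) \<in> borel_measurable (PiM J (\<lambda>_. S))"
    "(\<lambda>p. snd (iterates n p)) \<in> borel_measurable (PiM J (\<lambda>_. S))"
    using Suc past_mono[of n "Suc n"] by auto
  ultimately have [measurable]: "Dw (Suc n) \<in> J" "avg_grad n \<in> borel_measurable (PiM J (\<lambda>_. S))"
    and "(\<lambda>p. fst (iterates n p)) \<in> borel_measurable (PiM J (\<lambda>_. S))"
    using measurable_avg_grad by auto
  moreover have "(\<lambda>p. Cdwn (avg_grad n p) (p (Dw (Suc n)))) \<in> borel_measurable (PiM J (\<lambda>_. S))"
    by measurable
  ultimately show ?case
    unfolding iterates_Suc fst_conv snd_conv
    by (auto intro!: borel_measurable_diff borel_measurable_scaleR)
qed

lemmas measurable_iterates =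
  measurable_iterates_pair[THEN conjunct1] measurable_iterates_pair[THEN conjunct2]

section \<open>Moments of one Ghost step\<close>

definition W :: "nat \<Rightarrow> 'm \<Rightarrow> 'a" where
  "W n \<omega> = fst (iterates n (noise \<omega>))"

definition Wh :: "nat \<Rightarrow> 'm \<Rightarrow> 'a" where
  "Wh n \<omega> = snd (iterates n (noise \<omega>))"

definition V :: "nat \<Rightarrow> 'm \<Rightarrow> 'a" where
  "V n \<omega> = avg_grad n (noise \<omega>)"

definition uplink_error :: "nat \<Rightarrow> nat \<Rightarrow> 'm \<Rightarrow> 'a" where
  "uplink_error n i \<omega> = uplink_grad n i (noise \<omega>) - gradF (Wh n \<omega>)"

lemma ghost_eq: "ghost N \<gamma> G Cup Cdwn \<xi> w0 n \<omega> = (W n \<omega>, Wh n \<omega>)"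
  unfolding W_def Wh_def by (induction n) (simp_all add: iterates_def noise_def Let_def)

lemma W_0: "W 0 \<omega> = w0" and Wh_0: "Wh 0 \<omega> = w0"
  by (simp_all add: W_def Wh_def iterates_0)

lemma W_Suc: "W (Suc n) \<omega> = W n \<omega> - \<gamma> *\<^sub>R V n \<omega>"
  and Wh_Suc: "Wh (Suc n) \<omega> = W n \<omega> - \<gamma> *\<^sub>R Cdwn (V n \<omega>) (\<xi> (Dw (Suc n)) \<omega>)"
  by (simp_all add: W_def Wh_def V_def iterates_Suc noise_def)

lemma iterates_noise_on: "past n \<subseteq> J \<Longrightarrow> iterates n (noise_on J \<omega>) = iterates n (noise \<omega>)"
  by (rule iterates_cong) (auto simp: noise_def)

lemma uplink_grad_noise_on:
  "past n \<union> uplink_noise (Suc n) (Suc i) \<subseteq> J \<Longrightarrow> uplink_grad n i (noise_on J \<omega>) = uplink_grad n i (noise \<omega>)"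
  by (rule uplink_grad_cong) (auto simp: noise_def)

lemma avg_grad_noise_on:
  "past n \<union> uplink_noise (Suc n) N \<subseteq> J \<Longrightarrow> avg_grad n (noise_on J \<omega>) = avg_grad n (noise \<omega>)"
  by (rule avg_grad_cong) (auto simp: noise_def)

lemma measurable_V[measurable]: "V n \<in> borel_measurable M"
proof -
  let ?J = "past n \<union> uplink_noise (Suc n) N"
  have "?J \<subseteq> used_idx N"
    using past_subset_used uplink_noise_subset_used by auto
  moreover have "avg_grad n \<in> borel_measurable (PiM ?J (\<lambda>_. S))"
    by (rule measurable_avg_grad[OF _ measurable_iterates(2)]) auto
  ultimately have "(\<lambda>\<omega>. avg_grad n (noise_on ?J \<omega>)) \<in> borel_measurable M"
    using measurable_compose[OF measurable_noise_on] by blast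
  then show ?thesis by (simp add: avg_grad_noise_on V_def[abs_def])
qed

lemma square_integrable_gradF:
  assumes "square_integrable X"
  shows "square_integrable (\<lambda>\<omega>. gradF (X \<omega>))"
  using assms A2_smooth by (rule square_integrable_lipschitz) (use A2_L in simp)

lemma oracle_moments:
  assumes "k \<ge> 1" "i < N"
  shows "integrable M (\<lambda>\<omega>. (norm (G k i a (\<xi> (Orc k i) \<omega>)))\<^sup>2)"
    and "(\<integral>\<omega>. (norm (G k i a (\<xi> (Orc k i) \<omega>)))\<^sup>2 \<partial>M) \<le> \<sigma>\<^sup>2 / real b + (norm (gradF a))\<^sup>2"
  using integral_power2_norm_shift[OF A4_int A4_unb A4_var_int, OF assms assms assms, where y = 0]
    A4_var[OF assms, of a] by auto

lemma measurable_xi[measurable]: "i \<in> used_idx N \<Longrightarrow> \<xi> i \<in> measurable M S"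
  using indep unfolding indep_vars_def by auto

lemma compressed_oracle_moments:
  assumes "k \<ge> 1" "i < N"
  shows "integrable M (\<lambda>\<omega>. Cup (G k i a (\<xi> (Orc k i) \<omega>)) (\<xi> (Up k i) \<omega>))"
    and "(\<integral>\<omega>. Cup (G k i a (\<xi> (Orc k i) \<omega>)) (\<xi> (Up k i) \<omega>) \<partial>M) = gradF a"
    and "integrable M (\<lambda>\<omega>. (norm (Cup (G k i a (\<xi> (Orc k i) \<omega>)) (\<xi> (Up k i) \<omega>) - gradF a))\<^sup>2)"
    and "(\<integral>\<omega>. (norm (Cup (G k i a (\<xi> (Orc k i) \<omega>)) (\<xi> (Up k i) \<omega>) - gradF a))\<^sup>2 \<partial>M)
           \<le> \<omega>up * (norm (gradF a))\<^sup>2 + (1 + \<omega>up) * (\<sigma>\<^sup>2 / real b)"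
proof -
  have used[measurable]: "Orc k i \<in> used_idx N" "Up k i \<in> used_idx N"
    using assms by (auto simp: used_idx_def)
  define g where "g \<omega> = G k i a (\<xi> (Orc k i) \<omega>)" for \<omega>
  define Z where "Z \<omega> = Cup (g \<omega>) (\<xi> (Up k i) \<omega>)" for \<omega>
  have [measurable]: "g \<in> borel_measurable M" "Z \<in> borel_measurable M"
    unfolding g_def[abs_def] Z_def[abs_def] by measurable
  have g: "square_integrable g"
    using oracle_moments(1)[OF assms] by (simp add: square_integrable_def g_def)
  interpret U: independent_noise M "PiM {Orc k i} (\<lambda>_. S)" "noise_on {Orc k i}"
    "PiM {Up k i} (\<lambda>_. S)" "noise_on {Up k i}" "\<lambda>p q. Cup (G k i a (p (Orc k i))) (q (Up k i))"
    "\<lambda>p. G k i a (p (Orc k i))" "\<lambda>p. \<omega>up * (norm (G k i a (p (Orc k i))))\<^sup>2"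
    by unfold_locales (use assms used oracle_moments(1)[OF assms] in
        \<open>auto intro: indep_noise_on A1_up_int A1_up_unb A1_up_var_int A1_up_var\<close>)
  show "integrable M (\<lambda>\<omega>. Cup (G k i a (\<xi> (Orc k i) \<omega>)) (\<xi> (Up k i) \<omega>))"
    using U.integrable_noisy A4_int[OF assms] by simp
  show "(\<integral>\<omega>. Cup (G k i a (\<xi> (Orc k i) \<omega>)) (\<xi> (Up k i) \<omega>) \<partial>M) = gradF a"
    using U.integral_noisy A4_int[OF assms] A4_unb[OF assms] by simp
  have Z_g: "square_integrable (\<lambda>\<omega>. Z \<omega> - g \<omega>)"
    using U.integrable_noisy_variance by (simp add: square_integrable_def Z_def g_def)
  have g_grad: "square_integrable (\<lambda>\<omega>. g \<omega> - gradF a)"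
    using square_integrable_diff[OF g square_integrable_const] .
  have orthogonal: "(\<integral>\<omega>. (g \<omega> - gradF a) \<bullet> (Z \<omega> - g \<omega>) \<partial>M) = 0"
    using U.integral_noisy_orthogonal[of "\<lambda>p. G k i a (p (Orc k i)) - gradF a"] g_grad
    by (simp add: Z_def g_def)
  have Z_grad: "Z \<omega> - gradF a = (g \<omega> - gradF a) + (Z \<omega> - g \<omega>)" for \<omega>
    by simp
  show "integrable M (\<lambda>\<omega>. (norm (Cup (G k i a (\<xi> (Orc k i) \<omega>)) (\<xi> (Up k i) \<omega>) - gradF a))\<^sup>2)"
    using integrable_power2_norm[OF square_integrable_add[OF g_grad Z_g]]
    by (simp add: Z_grad[symmetric] Z_def g_def)
  have "(\<integral>\<omega>. (norm (Z \<omega> - gradF a))\<^sup>2 \<partial>M)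
      = (\<integral>\<omega>. (norm (g \<omega> - gradF a))\<^sup>2 \<partial>M) + (\<integral>\<omega>. (norm (Z \<omega> - g \<omega>))\<^sup>2 \<partial>M)"
    unfolding Z_grad by (rule integral_power2_norm_add_orthogonal[OF g_grad Z_g orthogonal])
  also have "\<dots> \<le> \<sigma>\<^sup>2 / real b + \<omega>up * (\<sigma>\<^sup>2 / real b + (norm (gradF a))\<^sup>2)"
    using U.integral_noisy_variance_le oracle_moments(2)[OF assms] A4_var[OF assms, of a] \<omega>
    by (intro add_mono) (auto simp: Z_def g_def intro: order_trans)
  also have "\<dots> = \<omega>up * (norm (gradF a))\<^sup>2 + (1 + \<omega>up) * (\<sigma>\<^sup>2 / real b)"
    by (simp add: ring_distribs add_divide_distrib)
  finally show "(\<integral>\<omega>. (norm (Cup (G k i a (\<xi> (Orc k i) \<omega>)) (\<xi> (Up k i) \<omega>) - gradF a))\<^sup>2 \<partial>M)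
      \<le> \<omega>up * (norm (gradF a))\<^sup>2 + (1 + \<omega>up) * (\<sigma>\<^sup>2 / real b)"
    by (simp add: Z_def g_def)
qed

lemma uplink_error_moments:
  assumes Wh: "square_integrable (Wh n)" and "i < N"
    and J: "past n \<subseteq> J" "J \<subseteq> used_idx N" "Orc (Suc n) i \<notin> J" "Up (Suc n) i \<notin> J"
  shows "square_integrable (uplink_error n i)"
    and "(\<integral>\<omega>. (norm (uplink_error n i \<omega>))\<^sup>2 \<partial>M)
      \<le> \<omega>up * (\<integral>\<omega>. (norm (gradF (Wh n \<omega>)))\<^sup>2 \<partial>M) + (1 + \<omega>up) * (\<sigma>\<^sup>2 / real b)"
    and "\<phi> \<in> borel_measurable (PiM J (\<lambda>_. S)) \<Longrightarrow> square_integrable (\<lambda>\<omega>. \<phi> (noise_on J \<omega>)) \<Longrightarrow>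
      (\<integral>\<omega>. \<phi> (noise_on J \<omega>) \<bullet> uplink_error n i \<omega> \<partial>M) = 0"
proof -
  let ?K = "{Orc (Suc n) i, Up (Suc n) i}"
  have used: "?K \<subseteq> used_idx N"
    using \<open>i < N\<close> by (auto simp: used_idx_def)
  note measurable_iterates(2)[OF J(1), measurable]
  have gradF_Wh: "square_integrable (\<lambda>\<omega>. gradF (Wh n \<omega>))"
    by (rule square_integrable_gradF[OF Wh])
  interpret U: independent_noise M "PiM J (\<lambda>_. S)" "noise_on J" "PiM ?K (\<lambda>_. S)" "noise_on ?K"
    "\<lambda>p q. Cup (G (Suc n) i (snd (iterates n p)) (q (Orc (Suc n) i))) (q (Up (Suc n) i))"
    "\<lambda>p. gradF (snd (iterates n p))"
    "\<lambda>p. \<omega>up * (norm (gradF (snd (iterates n p))))\<^sup>2 + (1 + \<omega>up) * (\<sigma>\<^sup>2 / real b)"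
    using compressed_oracle_moments[OF _ \<open>i < N\<close>] integrable_power2_norm[OF gradF_Wh]
    by unfold_locales (use J used in \<open>auto intro: indep_noise_on simp: iterates_noise_on Wh_def\<close>)
  have R_eq: "Cup (G (Suc n) i (snd (iterates n (noise_on J \<omega>))) (noise_on ?K \<omega> (Orc (Suc n) i)))
      (noise_on ?K \<omega> (Up (Suc n) i)) - gradF (snd (iterates n (noise_on J \<omega>))) = uplink_error n i \<omega>" for \<omega>
    using J(1) by (simp add: iterates_noise_on uplink_error_def uplink_grad_def Wh_def noise_def)
  have "(\<lambda>\<omega>. Cup (G (Suc n) i (snd (iterates n (noise_on J \<omega>))) (noise_on ?K \<omega> (Orc (Suc n) i)))
      (noise_on ?K \<omega> (Up (Suc n) i)) - gradF (snd (iterates n (noise_on J \<omega>)))) \<in> borel_measurable M"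
    using U.measurable_noisy J(2) by measurable
  then show "square_integrable (uplink_error n i)"
    using U.integrable_noisy_variance unfolding R_eq square_integrable_def by simp
  show "(\<integral>\<omega>. (norm (uplink_error n i \<omega>))\<^sup>2 \<partial>M)
      \<le> \<omega>up * (\<integral>\<omega>. (norm (gradF (Wh n \<omega>)))\<^sup>2 \<partial>M) + (1 + \<omega>up) * (\<sigma>\<^sup>2 / real b)"
    using U.integral_noisy_variance_le integrable_power2_norm[OF gradF_Wh] J(1)
    unfolding R_eq by (simp add: iterates_noise_on Wh_def[symmetric] prob_space)
  show "(\<integral>\<omega>. \<phi> (noise_on J \<omega>) \<bullet> uplink_error n i \<omega> \<partial>M) = 0"
    if "\<phi> \<in> borel_measurable (PiM J (\<lambda>_. S))" "square_integrable (\<lambda>\<omega>. \<phi> (noise_on J \<omega>))"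
    using U.integral_noisy_orthogonal[OF that] unfolding R_eq .
qed

lemma sum_uplink_error_moments:
  assumes Wh: "square_integrable (Wh n)"
  shows "square_integrable (\<lambda>\<omega>. \<Sum>i<N. uplink_error n i \<omega>)"
    and "(\<integral>\<omega>. (norm (\<Sum>i<N. uplink_error n i \<omega>))\<^sup>2 \<partial>M)
      \<le> real N * (\<omega>up * (\<integral>\<omega>. (norm (gradF (Wh n \<omega>)))\<^sup>2 \<partial>M) + (1 + \<omega>up) * (\<sigma>\<^sup>2 / real b))"
    and "\<phi> \<in> borel_measurable (PiM (past n) (\<lambda>_. S)) \<Longrightarrow>
      square_integrable (\<lambda>\<omega>. \<phi> (noise_on (past n) \<omega>)) \<Longrightarrow>
      (\<integral>\<omega>. \<phi> (noise_on (past n) \<omega>) \<bullet> (\<Sum>i<N. uplink_error n i \<omega>) \<partial>M) = 0"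
proof -
  note moments_past = uplink_error_moments[OF Wh _ subset_refl past_subset_used not_in_past(1,2)]
  have orthogonal: "(\<integral>\<omega>. (\<Sum>j<i. uplink_error n j \<omega>) \<bullet> uplink_error n i \<omega> \<partial>M) = 0"
    if "i < N" for i
  proof -
    let ?J = "past n \<union> uplink_noise (Suc n) i"
    have J: "past n \<subseteq> ?J" "?J \<subseteq> used_idx N" "Orc (Suc n) i \<notin> ?J" "Up (Suc n) i \<notin> ?J"
      using past_subset_used uplink_noise_subset_used[of i n] \<open>i < N\<close> by (auto simp: uplink_noise_def)
    define \<phi> where "\<phi> p = (\<Sum>j<i. uplink_grad n j p - gradF (snd (iterates n p)))" for p
    have "uplink_grad n j (noise_on ?J \<omega>) = uplink_grad n j (noise \<omega>)" if "j < i" for j \<omega>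
      using that by (intro uplink_grad_noise_on) (auto simp: uplink_noise_def)
    then have "\<phi> (noise_on ?J \<omega>) = (\<Sum>j<i. uplink_error n j \<omega>)" for \<omega>
      unfolding \<phi>_def uplink_error_def Wh_def using J(1)
      by (intro sum.cong refl) (simp add: iterates_noise_on)
    moreover have "\<phi> \<in> borel_measurable (PiM ?J (\<lambda>_. S))"
    proof -
      note measurable_iterates(2)[OF J(1), measurable]
      have [measurable]: "Orc (Suc n) j \<in> ?J" "Up (Suc n) j \<in> ?J" if "j < i" for j
        using that by (auto simp: uplink_noise_def)
      show ?thesis unfolding \<phi>_def[abs_def] uplink_grad_def by measurable
    qed
    moreover have "square_integrable (\<lambda>\<omega>. \<Sum>j<i. uplink_error n j \<omega>)"
      using moments_past(1) \<open>i < N\<close> by (intro square_integrable_sum) auto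
    ultimately show ?thesis
      using uplink_error_moments(3)[OF Wh \<open>i < N\<close> J, of \<phi>] by simp
  qed
  show "square_integrable (\<lambda>\<omega>. \<Sum>i<N. uplink_error n i \<omega>)"
    using moments_past(1) by (intro square_integrable_sum) auto
  show "(\<integral>\<omega>. (norm (\<Sum>i<N. uplink_error n i \<omega>))\<^sup>2 \<partial>M)
      \<le> real N * (\<omega>up * (\<integral>\<omega>. (norm (gradF (Wh n \<omega>)))\<^sup>2 \<partial>M) + (1 + \<omega>up) * (\<sigma>\<^sup>2 / real b))"
  proof -
    have "(\<integral>\<omega>. (norm (\<Sum>i<N. uplink_error n i \<omega>))\<^sup>2 \<partial>M) = (\<Sum>i<N. \<integral>\<omega>. (norm (uplink_error n i \<omega>))\<^sup>2 \<partial>M)"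
      using moments_past(1) orthogonal by (rule integral_power2_norm_sum_orthogonal)
    also have "\<dots> \<le> (\<Sum>i<N. \<omega>up * (\<integral>\<omega>. (norm (gradF (Wh n \<omega>)))\<^sup>2 \<partial>M) + (1 + \<omega>up) * (\<sigma>\<^sup>2 / real b))"
      by (intro sum_mono moments_past(2)) simp
    finally show ?thesis by simp
  qed
  show "(\<integral>\<omega>. \<phi> (noise_on (past n) \<omega>) \<bullet> (\<Sum>i<N. uplink_error n i \<omega>) \<partial>M) = 0"
    if "\<phi> \<in> borel_measurable (PiM (past n) (\<lambda>_. S))"
      "square_integrable (\<lambda>\<omega>. \<phi> (noise_on (past n) \<omega>))"
    using moments_past(1) moments_past(3)[OF _ that] integrable_inner_square_integrable[OF that(2)]
    by (simp add: inner_sum_right Bochner_Integration.integral_sum)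
qed

lemma V_eq: "V n \<omega> = gradF (Wh n \<omega>) + (1 / real N) *\<^sub>R (\<Sum>i<N. uplink_error n i \<omega>)"
proof -
  have "(\<Sum>i<N. uplink_error n i \<omega>) = real N *\<^sub>R (V n \<omega> - gradF (Wh n \<omega>))"
    using N by (simp add: uplink_error_def V_def avg_grad_def sum_subtractf scaleR_diff_right
        sum_constant_scaleR)
  then show ?thesis using N by simp
qed

lemma V_moments:
  assumes W: "square_integrable (W n)" and Wh: "square_integrable (Wh n)"
  shows "square_integrable (V n)"
    and "(\<integral>\<omega>. (norm (V n \<omega>))\<^sup>2 \<partial>M)
      \<le> (1 + \<omega>up / real N) * (\<integral>\<omega>. (norm (gradF (Wh n \<omega>)))\<^sup>2 \<partial>M) + (1 + \<omega>up) * \<sigma>\<^sup>2 / (real N * real b)"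
    and "(\<integral>\<omega>. V n \<omega> \<bullet> (W n \<omega> - wstar) \<partial>M) = (\<integral>\<omega>. gradF (Wh n \<omega>) \<bullet> (W n \<omega> - wstar) \<partial>M)"
proof -
  define g where "g \<omega> = gradF (Wh n \<omega>)" for \<omega>
  define E where "E \<omega> = (\<Sum>i<N. uplink_error n i \<omega>)" for \<omega>
  define u where "u \<omega> = W n \<omega> - wstar" for \<omega>
  note E = sum_uplink_error_moments[OF Wh, folded E_def]
  have g: "square_integrable g" and u: "square_integrable u"
    unfolding g_def[abs_def] u_def[abs_def]
    by (intro square_integrable_gradF Wh square_integrable_diff W square_integrable_const)+
  note measurable_iterates[OF subset_refl, measurable]
  have "(\<integral>\<omega>. gradF (snd (iterates n (noise_on (past n) \<omega>))) \<bullet> E \<omega> \<partial>M) = 0"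
    using square_integrable_gradF[OF Wh] by (intro E(3)) (simp_all add: Wh_def iterates_noise_on)
  then have g_E: "(\<integral>\<omega>. g \<omega> \<bullet> E \<omega> \<partial>M) = 0"
    by (simp add: g_def Wh_def iterates_noise_on)
  have "(\<integral>\<omega>. (fst (iterates n (noise_on (past n) \<omega>)) - wstar) \<bullet> E \<omega> \<partial>M) = 0"
    using square_integrable_diff[OF W square_integrable_const]
    by (intro E(3)) (simp_all add: W_def iterates_noise_on)
  then have u_E: "(\<integral>\<omega>. u \<omega> \<bullet> E \<omega> \<partial>M) = 0"
    by (simp add: u_def W_def iterates_noise_on)
  have V: "V n \<omega> = g \<omega> + (1 / real N) *\<^sub>R E \<omega>" for \<omega>
    by (simp add: V_eq g_def E_def)
  show "square_integrable (V n)"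
    unfolding V by (intro square_integrable_add g square_integrable_scaleR E(1))
  have "(\<integral>\<omega>. (norm (V n \<omega>))\<^sup>2 \<partial>M)
      = (\<integral>\<omega>. (norm (g \<omega>))\<^sup>2 \<partial>M) + 2 / real N * (\<integral>\<omega>. g \<omega> \<bullet> E \<omega> \<partial>M)
        + 1 / (real N)\<^sup>2 * (\<integral>\<omega>. (norm (E \<omega>))\<^sup>2 \<partial>M)"
    unfolding V power2_norm_add
    using integrable_power2_norm[OF g] integrable_power2_norm[OF E(1)]
      integrable_inner_square_integrable[OF g E(1)]
    by (simp add: power_mult_distrib power_divide)
  also have "\<dots> \<le> (\<integral>\<omega>. (norm (g \<omega>))\<^sup>2 \<partial>M) + 1 / (real N)\<^sup>2 *
      (real N * (\<omega>up * (\<integral>\<omega>. (norm (g \<omega>))\<^sup>2 \<partial>M) + (1 + \<omega>up) * (\<sigma>\<^sup>2 / real b)))"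
    using E(2) g_E by (simp add: g_def divide_right_mono)
  also have "\<dots> = (1 + \<omega>up / real N) * (\<integral>\<omega>. (norm (g \<omega>))\<^sup>2 \<partial>M) + (1 + \<omega>up) * \<sigma>\<^sup>2 / (real N * real b)"
    using N by (cases "b = 0") (simp_all add: power2_eq_square field_simps)
  finally show "(\<integral>\<omega>. (norm (V n \<omega>))\<^sup>2 \<partial>M)
      \<le> (1 + \<omega>up / real N) * (\<integral>\<omega>. (norm (gradF (Wh n \<omega>)))\<^sup>2 \<partial>M) + (1 + \<omega>up) * \<sigma>\<^sup>2 / (real N * real b)"
    by (simp add: g_def)
  have "V n \<omega> \<bullet> u \<omega> = g \<omega> \<bullet> u \<omega> + 1 / real N * (u \<omega> \<bullet> E \<omega>)" for \<omega>
    unfolding V by (simp add: inner_add_left inner_commute[of "E \<omega>" "u \<omega>"])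
  then show "(\<integral>\<omega>. V n \<omega> \<bullet> (W n \<omega> - wstar) \<partial>M) = (\<integral>\<omega>. gradF (Wh n \<omega>) \<bullet> (W n \<omega> - wstar) \<partial>M)"
    using integrable_inner_square_integrable[OF g u] integrable_inner_square_integrable[OF u E(1)] u_E
    by (simp add: u_def[symmetric] g_def[symmetric])
qed

lemma downlink_moments:
  assumes W: "square_integrable (W n)" and Wh: "square_integrable (Wh n)"
  shows "square_integrable (W (Suc n))" and "square_integrable (Wh (Suc n))"
    and "(\<integral>\<omega>. (norm (W (Suc n) \<omega> - Wh (Suc n) \<omega>))\<^sup>2 \<partial>M) \<le> \<gamma>\<^sup>2 * \<omega>dwn * (\<integral>\<omega>. (norm (V n \<omega>))\<^sup>2 \<partial>M)"
proof -
  let ?J = "past n \<union> uplink_noise (Suc n) N"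
  have J: "?J \<subseteq> used_idx N" "{Dw (Suc n)} \<subseteq> used_idx N" "?J \<inter> {Dw (Suc n)} = {}"
    using past_subset_used uplink_noise_subset_used by (auto simp: used_idx_def uplink_noise_def)
  have V: "square_integrable (V n)"
    by (rule V_moments(1)[OF W Wh])
  have [measurable]: "avg_grad n \<in> borel_measurable (PiM ?J (\<lambda>_. S))"
    by (rule measurable_avg_grad[OF _ measurable_iterates(2)]) auto
  interpret D: independent_noise M "PiM ?J (\<lambda>_. S)" "noise_on ?J" "PiM {Dw (Suc n)} (\<lambda>_. S)"
    "noise_on {Dw (Suc n)}" "\<lambda>p q. Cdwn (avg_grad n p) (q (Dw (Suc n)))" "avg_grad n"
    "\<lambda>p. \<omega>dwn * (norm (avg_grad n p))\<^sup>2"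
    using integrable_power2_norm[OF V]
    by unfold_locales (use J in \<open>auto intro: indep_noise_on A1_dw_var_int A1_dw_var
        simp: A1_dw_int A1_dw_unb avg_grad_noise_on V_def[symmetric]\<close>)
  have C: "square_integrable (\<lambda>\<omega>. Cdwn (V n \<omega>) (\<xi> (Dw (Suc n)) \<omega>) - V n \<omega>)"
    using D.measurable_noisy D.integrable_noisy_variance
    by (simp add: square_integrable_def avg_grad_noise_on V_def[symmetric])
  show "square_integrable (W (Suc n))"
    unfolding W_Suc by (intro square_integrable_diff W square_integrable_scaleR V)
  have "square_integrable (\<lambda>\<omega>. W n \<omega> - \<gamma> *\<^sub>R ((Cdwn (V n \<omega>) (\<xi> (Dw (Suc n)) \<omega>) - V n \<omega>) + V n \<omega>))"
    by (intro square_integrable_diff W square_integrable_scaleR square_integrable_add C V)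
  then show "square_integrable (Wh (Suc n))"
    unfolding Wh_Suc by simp
  have "W (Suc n) \<omega> - Wh (Suc n) \<omega> = \<gamma> *\<^sub>R (Cdwn (V n \<omega>) (\<xi> (Dw (Suc n)) \<omega>) - V n \<omega>)" for \<omega>
    by (simp add: W_Suc Wh_Suc algebra_simps)
  then have "(\<integral>\<omega>. (norm (W (Suc n) \<omega> - Wh (Suc n) \<omega>))\<^sup>2 \<partial>M)
      = \<gamma>\<^sup>2 * (\<integral>\<omega>. (norm (Cdwn (V n \<omega>) (\<xi> (Dw (Suc n)) \<omega>) - V n \<omega>))\<^sup>2 \<partial>M)"
    using \<gamma> by (simp add: power_mult_distrib)
  also have "\<dots> \<le> \<gamma>\<^sup>2 * (\<omega>dwn * (\<integral>\<omega>. (norm (V n \<omega>))\<^sup>2 \<partial>M))"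
    using D.integral_noisy_variance_le integrable_power2_norm[OF V]
    by (intro mult_left_mono) (simp_all add: avg_grad_noise_on V_def[symmetric])
  finally show "(\<integral>\<omega>. (norm (W (Suc n) \<omega> - Wh (Suc n) \<omega>))\<^sup>2 \<partial>M) \<le> \<gamma>\<^sup>2 * \<omega>dwn * (\<integral>\<omega>. (norm (V n \<omega>))\<^sup>2 \<partial>M)"
    by (simp add: mult.assoc)
qed

lemma square_integrable_W_Wh: "square_integrable (W n) \<and> square_integrable (Wh n)"
  by (induction n) (simp_all add: W_0 Wh_0 square_integrable_const downlink_moments)

lemmas square_integrable_W = square_integrable_W_Wh[THEN conjunct1]
  and square_integrable_Wh = square_integrable_W_Wh[THEN conjunct2]

lemma integrable_F_W: "integrable M (\<lambda>\<omega>. F (W n \<omega>))"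
  using A2_grad A2_smooth A2_L wstar square_integrable_W
  by (intro integrable_smooth_bounded_below[where L = L and c = "F wstar"]) auto

lemma expected_sq_dist_Suc:
  "(\<integral>\<omega>. (norm (W (Suc n) \<omega> - wstar))\<^sup>2 \<partial>M)
    = (\<integral>\<omega>. (norm (W n \<omega> - wstar))\<^sup>2 \<partial>M) - 2 * \<gamma> * (\<integral>\<omega>. gradF (Wh n \<omega>) \<bullet> (W n \<omega> - wstar) \<partial>M)
      + \<gamma>\<^sup>2 * (\<integral>\<omega>. (norm (V n \<omega>))\<^sup>2 \<partial>M)"
proof -
  have u: "square_integrable (\<lambda>\<omega>. W n \<omega> - wstar)"
    by (rule square_integrable_diff[OF square_integrable_W square_integrable_const])
  have V: "square_integrable (V n)"
    by (rule V_moments(1)[OF square_integrable_W square_integrable_Wh])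
  have "(norm (W (Suc n) \<omega> - wstar))\<^sup>2
      = (norm (W n \<omega> - wstar))\<^sup>2 - 2 * \<gamma> * (V n \<omega> \<bullet> (W n \<omega> - wstar)) + \<gamma>\<^sup>2 * (norm (V n \<omega>))\<^sup>2" for \<omega>
    using power2_norm_add[of "W n \<omega> - wstar" "- \<gamma> *\<^sub>R V n \<omega>"]
    by (simp add: W_Suc algebra_simps inner_commute power_mult_distrib)
  then have "(\<integral>\<omega>. (norm (W (Suc n) \<omega> - wstar))\<^sup>2 \<partial>M)
      = (\<integral>\<omega>. (norm (W n \<omega> - wstar))\<^sup>2 \<partial>M) - 2 * \<gamma> * (\<integral>\<omega>. V n \<omega> \<bullet> (W n \<omega> - wstar) \<partial>M)
        + \<gamma>\<^sup>2 * (\<integral>\<omega>. (norm (V n \<omega>))\<^sup>2 \<partial>M)"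
    using integrable_power2_norm[OF u] integrable_power2_norm[OF V] integrable_inner_square_integrable[OF V u]
    by simp
  then show ?thesis
    using V_moments(3)[OF square_integrable_W square_integrable_Wh] by simp
qed

lemma expected_descent:
  "- 2 * \<gamma> * (\<integral>\<omega>. gradF (Wh n \<omega>) \<bullet> (W n \<omega> - wstar) \<partial>M)
      + \<gamma>\<^sup>2 * (1 + \<omega>up / real N) * (\<integral>\<omega>. (norm (gradF (Wh n \<omega>)))\<^sup>2 \<partial>M)
    \<le> - \<gamma> * (\<integral>\<omega>. F (W n \<omega>) - F wstar \<partial>M) - \<gamma> / (2 * L) * (\<integral>\<omega>. (norm (gradF (Wh n \<omega>)))\<^sup>2 \<partial>M)
      + \<gamma> * L * (\<integral>\<omega>. (norm (W n \<omega> - Wh n \<omega>))\<^sup>2 \<partial>M)"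
proof -
  have g: "square_integrable (\<lambda>\<omega>. gradF (Wh n \<omega>))"
    by (rule square_integrable_gradF[OF square_integrable_Wh])
  have u: "square_integrable (\<lambda>\<omega>. W n \<omega> - wstar)"
    by (rule square_integrable_diff[OF square_integrable_W square_integrable_const])
  have d: "square_integrable (\<lambda>\<omega>. W n \<omega> - Wh n \<omega>)"
    by (rule square_integrable_diff[OF square_integrable_W square_integrable_Wh])
  have "(\<integral>\<omega>. - 2 * \<gamma> * (gradF (Wh n \<omega>) \<bullet> (W n \<omega> - wstar))
        + \<gamma>\<^sup>2 * (1 + \<omega>up / real N) * (norm (gradF (Wh n \<omega>)))\<^sup>2 \<partial>M)
      \<le> (\<integral>\<omega>. - \<gamma> * (F (W n \<omega>) - F wstar) - \<gamma> / (2 * L) * (norm (gradF (Wh n \<omega>)))\<^sup>2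
        + \<gamma> * L * (norm (W n \<omega> - Wh n \<omega>))\<^sup>2 \<partial>M)"
    using integrable_inner_square_integrable[OF g u] integrable_power2_norm[OF g]
      integrable_power2_norm[OF d] integrable_F_W step
    by (intro integral_mono smooth_convex_perturbed_descent[OF A2_grad A2_smooth A2_L A3 wstar \<gamma>])
      auto
  then show ?thesis
    using integrable_inner_square_integrable[OF g u] integrable_power2_norm[OF g]
      integrable_power2_norm[OF d] integrable_F_W
    by (simp add: prob_space)
qed

lemma expected_gap:
  "(\<integral>\<omega>. (norm (W n \<omega> - Wh n \<omega>))\<^sup>2 \<partial>M)
    \<le> (if n = 0 then 0 else \<gamma>\<^sup>2 * \<omega>dwn * ((1 + \<omega>up / real N) * (\<integral>\<omega>. (norm (gradF (Wh (n - 1) \<omega>)))\<^sup>2 \<partial>M)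
        + (1 + \<omega>up) * \<sigma>\<^sup>2 / (real N * real b)))"
proof (cases n)
  case 0
  then show ?thesis by (simp add: W_0 Wh_0)
next
  case (Suc m)
  have "(\<integral>\<omega>. (norm (W n \<omega> - Wh n \<omega>))\<^sup>2 \<partial>M) \<le> \<gamma>\<^sup>2 * \<omega>dwn * (\<integral>\<omega>. (norm (V m \<omega>))\<^sup>2 \<partial>M)"
    unfolding Suc by (rule downlink_moments(3)[OF square_integrable_W square_integrable_Wh])
  also have "\<dots> \<le> \<gamma>\<^sup>2 * \<omega>dwn * ((1 + \<omega>up / real N) * (\<integral>\<omega>. (norm (gradF (Wh m \<omega>)))\<^sup>2 \<partial>M)
        + (1 + \<omega>up) * \<sigma>\<^sup>2 / (real N * real b))"
    using V_moments(2)[OF square_integrable_W square_integrable_Wh] \<omega> by (intro mult_left_mono) auto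
  finally show ?thesis by (simp add: Suc)
qed

lemma one_step_bound:
  "(\<integral>\<omega>. (norm (W (Suc n) \<omega> - wstar))\<^sup>2 \<partial>M)
    \<le> (\<integral>\<omega>. (norm (W n \<omega> - wstar))\<^sup>2 \<partial>M)
      - \<gamma> * (\<integral>\<omega>. (F (W n \<omega>) - F wstar) \<partial>M)
      - \<gamma> / (2 * L) * (\<integral>\<omega>. (norm (gradF (Wh n \<omega>)))\<^sup>2 \<partial>M)
      + 2 * \<gamma> ^ 3 * \<omega>dwn * L * (1 + \<omega>up / real N)
          * (if n = 0 then 0 else (\<integral>\<omega>. (norm (gradF (Wh (n - 1) \<omega>)))\<^sup>2 \<partial>M))
      + \<gamma>\<^sup>2 * ((1 + \<omega>up) * \<sigma>\<^sup>2 / (real N * real b)) * (1 + 2 * \<gamma> * L * \<omega>dwn)"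
proof -
  define c where "c = 1 + \<omega>up / real N"
  define s where "s = (1 + \<omega>up) * \<sigma>\<^sup>2 / (real N * real b)"
  define g where "g = (\<integral>\<omega>. (norm (gradF (Wh n \<omega>)))\<^sup>2 \<partial>M)"
  define g' where "g' = (if n = 0 then 0 else (\<integral>\<omega>. (norm (gradF (Wh (n - 1) \<omega>)))\<^sup>2 \<partial>M))"
  define D where "D = (\<integral>\<omega>. (norm (W n \<omega> - Wh n \<omega>))\<^sup>2 \<partial>M)"
  have "c \<ge> 0" "s \<ge> 0" "g' \<ge> 0"
    using \<omega> by (simp_all add: c_def s_def g'_def)
  have "\<gamma>\<^sup>2 * (\<integral>\<omega>. (norm (V n \<omega>))\<^sup>2 \<partial>M) \<le> \<gamma>\<^sup>2 * (c * g + s)"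
    using V_moments(2)[OF square_integrable_W square_integrable_Wh]
    by (intro mult_left_mono) (simp_all add: c_def s_def g_def)
  then have V: "\<gamma>\<^sup>2 * (\<integral>\<omega>. (norm (V n \<omega>))\<^sup>2 \<partial>M) \<le> \<gamma>\<^sup>2 * c * g + \<gamma>\<^sup>2 * s"
    by (simp add: distrib_left mult.assoc)
  have "D \<le> \<gamma>\<^sup>2 * \<omega>dwn * (c * g' + s)"
  proof (cases "n = 0")
    case True
    then show ?thesis
      using expected_gap[of n] \<omega> \<open>s \<ge> 0\<close> by (simp add: D_def g'_def order_trans[of _ 0])
  next
    case False
    then show ?thesis
      using expected_gap[of n] by (simp add: D_def c_def s_def g'_def)
  qed
  then have "\<gamma> * L * D \<le> \<gamma> * L * (\<gamma>\<^sup>2 * \<omega>dwn * (c * g' + s))"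
    using \<gamma> A2_L by (intro mult_left_mono) auto
  also have "\<dots> \<le> 2 * \<gamma> ^ 3 * \<omega>dwn * L * c * g' + \<gamma>\<^sup>2 * s * (2 * \<gamma> * L * \<omega>dwn)"
    using \<gamma> A2_L \<omega> \<open>c \<ge> 0\<close> \<open>s \<ge> 0\<close> \<open>g' \<ge> 0\<close>
    by (simp add: power2_eq_square power3_eq_cube algebra_simps)
  finally have gap: "\<gamma> * L * D \<le> 2 * \<gamma> ^ 3 * \<omega>dwn * L * c * g' + \<gamma>\<^sup>2 * s * (2 * \<gamma> * L * \<omega>dwn)" .
  \<comment> \<open>the argument would also give the bound with \<open>\<gamma> ^ 3\<close> and \<open>\<gamma> * L * \<omega>dwn\<close> in place of
    \<open>2 * \<gamma> ^ 3\<close> and \<open>2 * \<gamma> * L * \<omega>dwn\<close>\<close>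
  have "\<gamma>\<^sup>2 * s * (1 + 2 * \<gamma> * L * \<omega>dwn) = \<gamma>\<^sup>2 * s + \<gamma>\<^sup>2 * s * (2 * \<gamma> * L * \<omega>dwn)"
    by (simp add: algebra_simps)
  then show ?thesis
    using expected_sq_dist_Suc[of n] expected_descent[of n] V gap
    unfolding c_def[symmetric] s_def[symmetric] g_def[symmetric] g'_def[symmetric] D_def[symmetric]
    by argo
qed

end

theorem mainTheorem7:
  fixes M :: "'m measure" and S :: "'b measure"
    and F :: "'a::euclidean_space \<Rightarrow> real" and gradF :: "'a \<Rightarrow> 'a"
    and G :: "nat \<Rightarrow> nat \<Rightarrow> 'a \<Rightarrow> 'b \<Rightarrow> 'a"
    and Cup Cdwn :: "'a \<Rightarrow> 'b \<Rightarrow> 'a"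
    and \<xi> :: "noise_idx \<Rightarrow> 'm \<Rightarrow> 'b"
    and N b :: nat and L \<gamma> \<sigma> \<omega>up \<omega>dwn :: real and w0 wstar :: 'a and k :: nat
  assumes P: "prob_space M"
    and indep: "prob_space.indep_vars M (\<lambda>_. S) \<xi> (used_idx N)"
    and N: "N \<ge> 1" and b: "b \<ge> 1"
    and \<gamma>: "\<gamma> > 0"
    and \<omega>: "\<omega>up > 0" "\<omega>dwn > 0"
    \<comment> \<open>measurability of the oracle and compression maps in (point, randomness)\<close>
    and G_meas: "\<And>k i. (\<lambda>p. G k i (fst p) (snd p)) \<in> borel_measurable (borel \<Otimes>\<^sub>M S)"
    and Cup_meas: "(\<lambda>p. Cup (fst p) (snd p)) \<in> borel_measurable (borel \<Otimes>\<^sub>M S)"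
    and Cdwn_meas: "(\<lambda>p. Cdwn (fst p) (snd p)) \<in> borel_measurable (borel \<Otimes>\<^sub>M S)"
    \<comment> \<open>(A1) uplink compression\<close>
    and A1_up_int: "\<And>v k i. k \<ge> 1 \<Longrightarrow> i < N \<Longrightarrow>
                      integrable M (\<lambda>\<omega>. Cup v (\<xi> (Up k i) \<omega>))"
    and A1_up_unb: "\<And>v k i. k \<ge> 1 \<Longrightarrow> i < N \<Longrightarrow>
                      (\<integral>\<omega>. Cup v (\<xi> (Up k i) \<omega>) \<partial>M) = v"
    and A1_up_var_int: "\<And>v k i. k \<ge> 1 \<Longrightarrow> i < N \<Longrightarrow>
                      integrable M (\<lambda>\<omega>. (norm (Cup v (\<xi> (Up k i) \<omega>) - v))\<^sup>2)"
    and A1_up_var: "\<And>v k i. k \<ge> 1 \<Longrightarrow> i < N \<Longrightarrow>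
                      (\<integral>\<omega>. (norm (Cup v (\<xi> (Up k i) \<omega>) - v))\<^sup>2 \<partial>M) \<le> \<omega>up * (norm v)\<^sup>2"
    \<comment> \<open>(A1) downlink compression\<close>
    and A1_dw_int: "\<And>v k. k \<ge> 1 \<Longrightarrow> integrable M (\<lambda>\<omega>. Cdwn v (\<xi> (Dw k) \<omega>))"
    and A1_dw_unb: "\<And>v k. k \<ge> 1 \<Longrightarrow> (\<integral>\<omega>. Cdwn v (\<xi> (Dw k) \<omega>) \<partial>M) = v"
    and A1_dw_var_int: "\<And>v k. k \<ge> 1 \<Longrightarrow>
                      integrable M (\<lambda>\<omega>. (norm (Cdwn v (\<xi> (Dw k) \<omega>) - v))\<^sup>2)"
    and A1_dw_var: "\<And>v k. k \<ge> 1 \<Longrightarrow>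
                      (\<integral>\<omega>. (norm (Cdwn v (\<xi> (Dw k) \<omega>) - v))\<^sup>2 \<partial>M) \<le> \<omega>dwn * (norm v)\<^sup>2"
    \<comment> \<open>(A2) F twice continuously differentiable with gradient gradF, L-smooth\<close>
    and A2_grad: "\<And>w. (F has_derivative (\<lambda>h. gradF w \<bullet> h)) (at w)"
    and A2_C2: "\<exists>H :: 'a \<Rightarrow> ('a \<Rightarrow>\<^sub>L 'a).
                  (\<forall>w. (gradF has_derivative blinfun_apply (H w)) (at w)) \<and> continuous_on UNIV H"
    and A2_L: "L > 0"
    and A2_smooth: "\<And>x y. norm (gradF x - gradF y) \<le> L * norm (x - y)"
    \<comment> \<open>(A3) with \<mu> = 0: convexity\<close>
    and A3: "convex_on UNIV F"
    \<comment> \<open>w_star is a minimizer\<close>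
    and wstar: "\<And>w. F wstar \<le> F w"
    \<comment> \<open>(A4) unbiased oracles with bounded variance\<close>
    and A4_int: "\<And>w k i. k \<ge> 1 \<Longrightarrow> i < N \<Longrightarrow> integrable M (\<lambda>\<omega>. G k i w (\<xi> (Orc k i) \<omega>))"
    and A4_unb: "\<And>w k i. k \<ge> 1 \<Longrightarrow> i < N \<Longrightarrow> (\<integral>\<omega>. G k i w (\<xi> (Orc k i) \<omega>) \<partial>M) = gradF w"
    and A4_var_int: "\<And>w k i. k \<ge> 1 \<Longrightarrow> i < N \<Longrightarrow>
                      integrable M (\<lambda>\<omega>. (norm (G k i w (\<xi> (Orc k i) \<omega>) - gradF w))\<^sup>2)"
    and A4_var: "\<And>w k i. k \<ge> 1 \<Longrightarrow> i < N \<Longrightarrow>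
                      (\<integral>\<omega>. (norm (G k i w (\<xi> (Orc k i) \<omega>) - gradF w))\<^sup>2 \<partial>M) \<le> \<sigma>\<^sup>2 / real b"
    \<comment> \<open>step size condition\<close>
    and step: "\<gamma> * L * (1 + \<omega>up / real N) \<le> 1 / 2"
    and k: "k \<ge> 1"
  shows
    "(let w = (\<lambda>j \<omega>. fst (ghost N \<gamma> G Cup Cdwn \<xi> w0 j \<omega>));
          wh = (\<lambda>j \<omega>. snd (ghost N \<gamma> G Cup Cdwn \<xi> w0 j \<omega>))
      in (\<integral>\<omega>. (norm (w k \<omega> - wstar))\<^sup>2 \<partial>M)
         \<le> (\<integral>\<omega>. (norm (w (k - 1) \<omega> - wstar))\<^sup>2 \<partial>M)
           - \<gamma> * (\<integral>\<omega>. (F (w (k - 1) \<omega>) - F wstar) \<partial>M)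
           - \<gamma> / (2 * L) * (\<integral>\<omega>. (norm (gradF (wh (k - 1) \<omega>)))\<^sup>2 \<partial>M)
           + 2 * \<gamma> ^ 3 * \<omega>dwn * L * (1 + \<omega>up / real N)
               * (if k = 1 then 0 else (\<integral>\<omega>. (norm (gradF (wh (k - 2) \<omega>)))\<^sup>2 \<partial>M))
           + \<gamma>\<^sup>2 * ((1 + \<omega>up) * \<sigma>\<^sup>2 / (real N * real b)) * (1 + 2 * \<gamma> * L * \<omega>dwn))"
proof -
  interpret ghost_setting M S \<xi> N F gradF G Cup Cdwn b L \<gamma> \<sigma> \<omega>up \<omega>dwn w0 wstar
    by (rule ghost_setting.intro[OF P ghost_setting_axioms.intro])
      (fact indep N \<gamma> \<omega> G_meas Cup_meas Cdwn_meas A1_up_int A1_up_unb A1_up_var_int A1_up_var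
        A1_dw_int A1_dw_unb A1_dw_var_int A1_dw_var A2_grad A2_L A2_smooth A3 wstar A4_int A4_unb
        A4_var_int A4_var step)+
  obtain n where n: "k = Suc n"
    using k by (cases k) auto
  then have index: "k - 1 = n" "k - 2 = n - 1" "(k = 1) = (n = 0)"
    by auto
  show ?thesis
    unfolding Let_def ghost_eq fst_conv snd_conv index using one_step_bound[of n] unfolding n .
qed

end
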